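(* Let $\mathsf{C}_A\subset V_A$ and $\mathsf{C}_B\subset V_B$ be proper cones. For every $x$ in the interior of $\mathsf{C}_A\otimes_{\max}\mathsf{C}_B$ and every $y$ in the interior of $\mathsf{C}_B$, there is an integer $k\ge1$ such that \[(\mathrm{Id}_{V_A}\otimes P_{\mathrm{Sym}_k(V_B)})(x\otimes y^{\otimes(k-1)})\in \mathsf{C}_A\otimes_{\min}\mathsf{C}_B^{\otimes_{\min}k}.\]
   Context: A convex cone in a finite-dimensional real vector space is proper if it is closed, contains no line, and is not contained in any hyperplane; $\mathsf{C}^*=\{f\in V^*: f\ge0\text{ on }\mathsf{C}\}$. $\mathsf{C}_A\otimes_{\min}\mathsf{C}_B=\mathrm{conv}\{a\otimes b:a\in\mathsf{C}_A,b\in\mathsf{C}_B\}$ (iterated for $\mathsf{C}_A\otimes_{\min}\mathsf{C}_B^{\otimes_{\min}k}$), and $\mathsf{C}_A\otimes_{\max}\mathsf{C}_B=\{z: (f\otimes g)(z)\ge0\ \forall f\in\mathsf{C}_A^*,g\in\mathsf{C}_B^*\}$. For $\sigma\in\mathfrak{S}_k$, $U_\sigma:V^{\otimes k}\to V^{\otimes k}$ is the linear map with $U_\sigma(x_1\otimes\cdots\otimes x_k)=x_{\sigma^{-1}(1)}\otimes\cdots\otimes x_{\sigma^{-1}(k)}$, and $P_{\mathrm{Sym}_k(V)}=\frac1{k!}\sum_{\sigma\in\mathfrak S_k}U_\sigma$ is the symmetric projection. *)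

theory Defs
  imports "HOL-Analysis.Analysis" "HOL-Combinatorics.Permutations"
begin

text \<open>The tensor product V_A (x) V_B is real^('a * 'b); the space V_A (x) V_B^(x k) (k varying) is
  modelled by coefficient functions 'a => 'b list => real, supported on lists of length k.\<close>

definition proper_cone :: "(real^'n) set \<Rightarrow> bool" where
  "proper_cone C \<longleftrightarrow> convex C \<and> cone C \<and> C \<noteq> {} \<and> closed C
     \<and> (\<forall>v. v \<in> C \<and> - v \<in> C \<longrightarrow> v = 0)
     \<and> \<not> (\<exists>f. linear f \<and> f \<noteq> (\<lambda>_. 0) \<and> (\<forall>c\<in>C. f c = (0::real)))"

definition dual_cone :: "(real^'n) set \<Rightarrow> (real^'n \<Rightarrow> real) set" where
  "dual_cone C = {f. linear f \<and> (\<forall>c\<in>C. f c \<ge> 0)}"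

definition tensor_functional ::
  "(real^'a \<Rightarrow> real) \<Rightarrow> (real^'b \<Rightarrow> real) \<Rightarrow> real^('a \<times> 'b) \<Rightarrow> real" where
  "tensor_functional f g z = (\<Sum>i\<in>UNIV. \<Sum>j\<in>UNIV. f (axis i 1) * g (axis j 1) * z $ (i, j))"

definition max_tensor :: "(real^'a) set \<Rightarrow> (real^'b) set \<Rightarrow> (real^('a \<times> 'b)) set" where
  "max_tensor CA CB = {z. \<forall>f\<in>dual_cone CA. \<forall>g\<in>dual_cone CB. tensor_functional f g z \<ge> 0}"

definition elem_tensor :: "real^'a \<Rightarrow> (real^'b) list \<Rightarrow> 'a \<Rightarrow> 'b list \<Rightarrow> real" where
  "elem_tensor a bs = (\<lambda>i js. if length js = length bs
       then a $ i * (\<Prod>m<length bs. (bs ! m) $ (js ! m)) else 0)"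

definition conv_fun :: "('a \<Rightarrow> 'b list \<Rightarrow> real) set \<Rightarrow> ('a \<Rightarrow> 'b list \<Rightarrow> real) set" where
  "conv_fun S = {z. \<exists>(n::nat) c v. (\<forall>m<n. c m \<ge> (0::real) \<and> v m \<in> S)
       \<and> (\<Sum>m<n. c m) = 1 \<and> z = (\<lambda>i js. \<Sum>m<n. c m * v m i js)}"

definition min_tensor_pow ::
  "(real^'a) set \<Rightarrow> (real^'b) set \<Rightarrow> nat \<Rightarrow> ('a \<Rightarrow> 'b list \<Rightarrow> real) set" where
  "min_tensor_pow CA CB k = conv_fun {elem_tensor a bs | a bs. a \<in> CA \<and> length bs = k \<and> set bs \<subseteq> CB}"

text \<open>x (x) y^(x (k-1)) in V_A (x) V_B^(x k), where x \<in> V_A (x) V_B occupies V_A and the first V_B factor.\<close>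
definition x_tensor_ypow :: "real^('a::finite \<times> 'b::finite) \<Rightarrow> real^'b \<Rightarrow> nat \<Rightarrow> 'a \<Rightarrow> 'b list \<Rightarrow> real" where
  "x_tensor_ypow x y k = (\<lambda>i js. if length js = k \<and> k \<ge> 1
       then x $ (i, js ! 0) * (\<Prod>m\<in>{1..<k}. y $ (js ! m)) else 0)"

definition U_perm :: "nat \<Rightarrow> (nat \<Rightarrow> nat) \<Rightarrow> ('a \<Rightarrow> 'b list \<Rightarrow> real) \<Rightarrow> 'a \<Rightarrow> 'b list \<Rightarrow> real" where
  "U_perm k \<sigma> T = (\<lambda>i js. if length js = k then T i (map (\<lambda>m. js ! \<sigma> m) [0..<k]) else 0)"

definition id_tensor_sym_proj :: "nat \<Rightarrow> ('a \<Rightarrow> 'b list \<Rightarrow> real) \<Rightarrow> 'a \<Rightarrow> 'b list \<Rightarrow> real" where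
  "id_tensor_sym_proj k T = (\<lambda>i js. (1 / fact k) * (\<Sum>\<sigma>\<in>{\<sigma>. \<sigma> permutes {0..<k}}. U_perm k \<sigma> T i js))"

end

theory Submission
  imports Defs
begin

text \<open>Pick a finite grid G \<subseteq> C_B spanning V_B, write y = \<Sum> \<mu>_g g with all \<mu>_g bounded below, and
  x = \<Sum> c_g \<otimes> g. Symmetrising x \<otimes> y^(k-1) expands it over tuples t \<in> G^k into elementary tensors
  D_t \<otimes> t_1 \<otimes> ... \<otimes> t_k, so it suffices that every D_t lies in C_A. The decomposition of x is not
  unique: adding \<theta> \<rho>_g a_0 with \<Sum> \<rho>_g g = 0 does not change x, and each position of a tuple may use its
  own such correction. Against u \<in> C_A^*, interiority of x writes contract_left x u as a combination of
  G with coefficients comparable to |u| and gives u \<bullet> a_0 \<ge> r |u|. Choosing the correction from the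
  visit weights of t turns the pairing into a quadratic expression in the defect which is nonnegative
  by AM-GM for \<theta> = A / k, with A large compared to |G| and then k large compared to A.\<close>

section \<open>Cones and the maximal tensor product\<close>

lemma cone_mem_of_dual_nonneg:
  fixes C :: "(real^'n) set"
  assumes "convex C" "closed C" "cone C" "C \<noteq> {}"
    and dual: "\<And>v. (\<forall>c\<in>C. 0 \<le> v \<bullet> c) \<Longrightarrow> 0 \<le> v \<bullet> p"
  shows "p \<in> C"
proof (rule ccontr)
  assume "p \<notin> C"
  then obtain a b where ab: "a \<bullet> p < b" "\<forall>x\<in>C. b < a \<bullet> x"
    using separating_hyperplane_closed_point assms(1,2) by blast
  have "0 \<in> C" using assms(3,4) by (simp add: cone_contains_0)
  then have b0: "b < 0" using ab by auto
  have "0 \<le> a \<bullet> c" if c: "c \<in> C" for c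
  proof (rule ccontr)
    assume "\<not> 0 \<le> a \<bullet> c"
    then have neg: "a \<bullet> c < 0" by simp
    define l where "l = b / (a \<bullet> c)"
    have "l \<ge> 0" using neg b0 unfolding l_def by (simp add: divide_nonpos_neg)
    then have "l *\<^sub>R c \<in> C" using c assms(3) unfolding cone_def by blast
    moreover have "a \<bullet> (l *\<^sub>R c) = b" using neg unfolding l_def by simp
    ultimately show False using ab by fastforce
  qed
  then have "0 \<le> a \<bullet> p" using dual by blast
  then show False using ab b0 by simp
qed

lemma cball_subset_cone_of_dual_margin:
  fixes C :: "(real^'n) set"
  assumes "convex C" "closed C" "cone C" "C \<noteq> {}"
    and margin: "\<And>v. \<forall>c\<in>C. 0 \<le> v \<bullet> c \<Longrightarrow> e * norm v \<le> v \<bullet> w"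
  shows "cball w e \<subseteq> C"
proof
  fix p assume "p \<in> cball w e"
  then have d: "norm (w - p) \<le> e" by (simp add: dist_norm)
  show "p \<in> C"
  proof (rule cone_mem_of_dual_nonneg[OF assms(1-4)])
    fix v assume v: "\<forall>c\<in>C. 0 \<le> v \<bullet> c"
    have "v \<bullet> (w - p) \<le> norm v * norm (w - p)" by (rule norm_cauchy_schwarz)
    also have "\<dots> \<le> norm v * e" using d by (simp add: mult_left_mono)
    finally show "0 \<le> v \<bullet> p" using margin[OF v] by (simp add: inner_diff_right mult.commute)
  qed
qed

lemma pointed_cone_has_nonzero_dual:
  fixes C :: "(real^'n) set"
  assumes "convex C" "closed C" "cone C" "C \<noteq> {}"
    and pointed: "\<forall>v. v \<in> C \<and> - v \<in> C \<longrightarrow> v = 0"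
  obtains v where "\<forall>c\<in>C. 0 \<le> v \<bullet> c" "v \<noteq> 0"
proof -
  obtain p where "p \<notin> C"
    using pointed[rule_format, of "axis undefined 1"] by (auto simp: axis_eq_0_iff)
  then obtain v where "\<forall>c\<in>C. 0 \<le> v \<bullet> c" "v \<bullet> p < 0"
    using cone_mem_of_dual_nonneg[OF assms(1-4), of p] by force
  then show thesis using that by fastforce
qed

definition contract_left :: "real^('a \<times> 'b) \<Rightarrow> real^'a \<Rightarrow> real^'b" where
  "contract_left x u = (\<chi> j. \<Sum>i\<in>UNIV. u$i * x$(i,j))"

lemma inner_contract_left: "v \<bullet> contract_left x u = (\<Sum>i\<in>UNIV. \<Sum>j\<in>UNIV. u$i * v$j * x$(i,j))"
proof -
  have "v \<bullet> contract_left x u = (\<Sum>j\<in>UNIV. \<Sum>i\<in>UNIV. u$i * v$j * x$(i,j))"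
    unfolding inner_vec_def contract_left_def by (simp add: sum_distrib_left mult_ac)
  also have "\<dots> = (\<Sum>i\<in>UNIV. \<Sum>j\<in>UNIV. u$i * v$j * x$(i,j))" by (rule sum.swap)
  finally show ?thesis .
qed

lemma contract_left_eq_sum_rows:
  "contract_left x u = (\<Sum>i\<in>UNIV. u$i *\<^sub>R (\<chi> j. x$(i,j)))"
  by (simp add: contract_left_def vec_eq_iff sum_component)

lemma norm_contract_left_le:
  "norm (contract_left x u) \<le> (\<Sum>j\<in>UNIV. \<Sum>i\<in>UNIV. \<bar>x$(i,j)\<bar>) * norm u"
proof -
  have "norm (contract_left x u) \<le> (\<Sum>j\<in>UNIV. \<bar>contract_left x u $ j\<bar>)" by (rule norm_le_l1_cart)
  also have "\<dots> \<le> (\<Sum>j\<in>UNIV. \<Sum>i\<in>UNIV. \<bar>x$(i,j)\<bar> * norm u)"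
  proof (rule sum_mono)
    fix j
    have "\<bar>contract_left x u $ j\<bar> \<le> (\<Sum>i\<in>UNIV. \<bar>u$i * x$(i,j)\<bar>)"
      unfolding contract_left_def by (simp add: sum_abs)
    also have "\<dots> \<le> (\<Sum>i\<in>UNIV. \<bar>x$(i,j)\<bar> * norm u)"
    proof (rule sum_mono)
      fix i
      have "\<bar>u$i\<bar> \<le> norm u" by (rule component_le_norm_cart)
      then show "\<bar>u$i * x$(i,j)\<bar> \<le> \<bar>x$(i,j)\<bar> * norm u"
        by (simp add: abs_mult mult.commute[of "\<bar>x$(i,j)\<bar>"] mult_right_mono)
    qed
    finally show "\<bar>contract_left x u $ j\<bar> \<le> (\<Sum>i\<in>UNIV. \<bar>x$(i,j)\<bar> * norm u)" .
  qed
  also have "\<dots> = (\<Sum>j\<in>UNIV. \<Sum>i\<in>UNIV. \<bar>x$(i,j)\<bar>) * norm u" by (simp add: sum_distrib_right)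
  finally show ?thesis .
qed

lemma sum_sum_sq_product:
  fixes u :: "real^'a" and v :: "real^'b"
  shows "(\<Sum>i\<in>UNIV. \<Sum>j\<in>UNIV. (u$i)^2 * (v$j)^2) = (norm u * norm v)^2"
proof -
  have "(\<Sum>i\<in>UNIV. \<Sum>j\<in>UNIV. (u$i)^2 * (v$j)^2) = (\<Sum>i\<in>UNIV. (u$i)^2) * (\<Sum>j\<in>UNIV. (v$j)^2)"
    by (rule sum_product[symmetric])
  also have "\<dots> = (norm u)^2 * (norm v)^2"
    unfolding power2_norm_eq_inner inner_vec_def by (simp add: power2_eq_square)
  finally show ?thesis by (simp add: power_mult_distrib)
qed

lemma norm_outer_product:
  fixes u :: "real^'a" and v :: "real^'b"
  shows "norm ((\<chi> p. u$(fst p) * v$(snd p)) :: real^('a\<times>'b)) = norm u * norm v"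
proof -
  let ?T = "(\<chi> p. u$(fst p) * v$(snd p)) :: real^('a\<times>'b)"
  have "(norm ?T)^2 = (\<Sum>p\<in>UNIV. (u$(fst p) * v$(snd p))^2)"
    unfolding power2_norm_eq_inner inner_vec_def by (simp add: power2_eq_square)
  also have "\<dots> = (\<Sum>p\<in>UNIV \<times> UNIV. (u$(fst p) * v$(snd p))^2)" by (simp add: UNIV_Times_UNIV)
  also have "\<dots> = (\<Sum>i\<in>UNIV. \<Sum>j\<in>UNIV. (u$i)^2 * (v$j)^2)"
    by (simp add: sum.cartesian_product power_mult_distrib case_prod_unfold)
  also have "\<dots> = (norm u * norm v)^2" by (rule sum_sum_sq_product)
  finally show ?thesis by (simp add: power2_eq_iff_nonneg)
qed

lemma inner_dual_cone: "(\<forall>c\<in>C. 0 \<le> u \<bullet> c) \<Longrightarrow> (\<lambda>a. u \<bullet> a) \<in> dual_cone C"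
  unfolding dual_cone_def by (simp add: linear_iff inner_add_right)

lemma tensor_functional_inner:
  "tensor_functional (\<lambda>a. u \<bullet> a) (\<lambda>b. v \<bullet> b) z = (\<Sum>i\<in>UNIV. \<Sum>j\<in>UNIV. u$i * v$j * z$(i,j))"
  unfolding tensor_functional_def by (simp add: inner_axis)

text \<open>Evaluate u \<otimes> v at the point of the ball around x that lies in the direction -(u \<otimes> v).\<close>
lemma max_tensor_cball_margin:
  fixes CA :: "(real^'a) set" and CB :: "(real^'b) set" and x :: "real^('a \<times> 'b)"
  assumes cb: "cball x \<zeta> \<subseteq> max_tensor CA CB" and "\<zeta> > 0"
    and u: "\<forall>a\<in>CA. 0 \<le> u \<bullet> a" and v: "\<forall>b\<in>CB. 0 \<le> v \<bullet> b"
  shows "\<zeta> * norm u * norm v \<le> v \<bullet> contract_left x u"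
proof (cases "u = 0 \<or> v = 0")
  case True
  then show ?thesis by (auto simp: inner_contract_left)
next
  case False
  then have nz: "norm u * norm v > 0" by simp
  define s where "s = \<zeta> / (norm u * norm v)"
  define z where "z = x - s *\<^sub>R (\<chi> p. u$(fst p) * v$(snd p))"
  have "dist x z = \<zeta>"
    unfolding z_def s_def dist_norm using nz \<open>\<zeta> > 0\<close> False by (simp add: norm_outer_product)
  then have "z \<in> max_tensor CA CB" using cb by auto
  then have "0 \<le> tensor_functional (\<lambda>a. u \<bullet> a) (\<lambda>b. v \<bullet> b) z"
    unfolding max_tensor_def using inner_dual_cone[OF u] inner_dual_cone[OF v] by blast
  also have "tensor_functional (\<lambda>a. u \<bullet> a) (\<lambda>b. v \<bullet> b) z
      = v \<bullet> contract_left x u - s * (norm u * norm v)^2"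
    unfolding tensor_functional_inner inner_contract_left z_def sum_sum_sq_product[symmetric]
    by (simp add: algebra_simps sum_subtractf sum_distrib_left power2_eq_square)
  also have "s * (norm u * norm v)^2 = \<zeta> * norm u * norm v"
    unfolding s_def using nz by (simp add: power2_eq_square)
  finally show ?thesis by simp
qed

lemma cball_contract_left_subset:
  fixes CA :: "(real^'a) set" and CB :: "(real^'b) set"
  assumes "convex CB" "closed CB" "cone CB" "CB \<noteq> {}"
    and "cball x \<zeta> \<subseteq> max_tensor CA CB" "\<zeta> > 0" and "\<forall>a\<in>CA. 0 \<le> u \<bullet> a"
  shows "cball (contract_left x u) (\<zeta> * norm u) \<subseteq> CB"
  using assms by (intro cball_subset_cone_of_dual_margin) (auto intro: max_tensor_cball_margin)

lemma dual_lower_bound_of_cball_max_tensor: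
  fixes CA :: "(real^'a) set" and CB :: "(real^'b) set"
  assumes CB: "convex CB" "closed CB" "cone CB" "CB \<noteq> {}"
    and pointed: "\<forall>v. v \<in> CB \<and> - v \<in> CB \<longrightarrow> v = 0"
    and x: "cball x \<zeta> \<subseteq> max_tensor CA CB" "\<zeta> > 0"
  obtains a0 r where "r > 0" "\<And>u. \<forall>a\<in>CA. 0 \<le> u \<bullet> a \<Longrightarrow> r * norm u \<le> u \<bullet> a0"
proof -
  obtain v where v: "\<forall>b\<in>CB. 0 \<le> v \<bullet> b" "v \<noteq> 0"
    using pointed_cone_has_nonzero_dual[OF CB pointed] by blast
  define a0 :: "real^'a" where "a0 = (\<chi> i. \<Sum>j\<in>UNIV. x$(i,j) * v$j)"
  have "u \<bullet> a0 = v \<bullet> contract_left x u" for u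
    unfolding inner_contract_left unfolding a0_def inner_vec_def by (simp add: sum_distrib_left mult_ac)
  then have "\<zeta> * norm v * norm u \<le> u \<bullet> a0" if "\<forall>a\<in>CA. 0 \<le> u \<bullet> a" for u
    using max_tensor_cball_margin[OF x that v(1)] by (simp add: mult_ac)
  moreover have "\<zeta> * norm v > 0" using x(2) v(2) by simp
  ultimately show thesis using that by blast
qed

section \<open>Finite grids in a cone\<close>

lemma spanning_set_coefficient_functionals:
  fixes G :: "'v::euclidean_space set"
  assumes "finite G" "span G = UNIV"
  obtains R :: "'v \<Rightarrow> 'v \<Rightarrow> real"
  where "\<And>g. linear (R g)" "\<And>v. (\<Sum>g\<in>G. R g v *\<^sub>R g) = v"
proof -
  have "\<exists>c. (\<Sum>g\<in>G. c g *\<^sub>R g) = b" for b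
  proof -
    have "b \<in> span G" using assms(2) by simp
    then show ?thesis unfolding span_finite[OF assms(1)] by blast
  qed
  then obtain c where c: "\<And>b. (\<Sum>g\<in>G. c b g *\<^sub>R g) = b" by metis
  define R where "R g v = (\<Sum>b\<in>Basis. (v \<bullet> b) * c b g)" for g v
  show thesis
  proof
    show "linear (R g)" for g
      unfolding R_def linear_iff
      by (simp add: inner_add_left distrib_right sum.distrib sum_distrib_left mult.assoc)
    show "(\<Sum>g\<in>G. R g v *\<^sub>R g) = v" for v
    proof -
      have "(\<Sum>g\<in>G. R g v *\<^sub>R g) = (\<Sum>g\<in>G. \<Sum>b\<in>Basis. ((v \<bullet> b) * c b g) *\<^sub>R g)"
        unfolding R_def by (simp add: scaleR_sum_left)
      also have "\<dots> = (\<Sum>b\<in>Basis. \<Sum>g\<in>G. ((v \<bullet> b) * c b g) *\<^sub>R g)" by (rule sum.swap)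
      also have "\<dots> = (\<Sum>b\<in>Basis. (v \<bullet> b) *\<^sub>R (\<Sum>g\<in>G. c b g *\<^sub>R g))"
        by (simp add: scaleR_sum_right)
      also have "\<dots> = v" by (simp add: c euclidean_representation)
      finally show ?thesis .
    qed
  qed
qed

lemma linear_functional_sum_scaleR:
  fixes f :: "'v::real_vector \<Rightarrow> real"
  assumes "linear f"
  shows "f (\<Sum>h\<in>H. a h *\<^sub>R h) = (\<Sum>h\<in>H. a h * f h)"
  by (simp add: linear_sum[OF assms] linear_scale[OF assms])

lemma vector_sum_axis: "(\<Sum>l\<in>UNIV. (d$l) *\<^sub>R axis l (1::real)) = (d::real^'n)"
  by (simp add: vec_eq_iff axis_def if_distrib sum.delta cong: if_cong)

definition lattice_point :: "real \<Rightarrow> ('n \<Rightarrow> int) \<Rightarrow> real^'n" where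
  "lattice_point h z = (\<chi> l. h * of_int (z l))"

lemma cube_in_cross_polytope:
  fixes d q :: "real^'n"
  assumes "h > 0" and d: "\<And>l. 0 \<le> d$l" "\<And>l. d$l \<le> h"
  defines "N \<equiv> real CARD('n) * h"
  obtains \<alpha> \<beta> where "\<And>l. 0 \<le> \<alpha> l" "\<And>l. 0 \<le> \<beta> l" "(\<Sum>l\<in>UNIV. \<alpha> l + \<beta> l) = 1"
    "q + d = (\<Sum>l\<in>UNIV. \<alpha> l *\<^sub>R (q + N *\<^sub>R axis l 1) + \<beta> l *\<^sub>R (q - N *\<^sub>R axis l 1))"
proof
  define n where "n = real CARD('n)"
  have n1: "n \<ge> 1" unfolding n_def by simp
  have N0: "N > 0" unfolding N_def using assms(1) by simp
  define \<alpha> where "\<alpha> l = 1 / (2 * n) + d$l / (2 * N)" for l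
  define \<beta> where "\<beta> l = 1 / (2 * n) - d$l / (2 * N)" for l
  show "0 \<le> \<alpha> l" for l unfolding \<alpha>_def using d(1)[of l] n1 N0 by simp
  show "0 \<le> \<beta> l" for l
  proof -
    have "d$l / (2 * N) \<le> h / (2 * N)" using d(2)[of l] N0 by (simp add: divide_right_mono)
    also have "\<dots> = 1 / (2 * n)" unfolding N_def n_def using assms(1) by simp
    finally show ?thesis unfolding \<beta>_def by simp
  qed
  show sum1: "(\<Sum>l\<in>UNIV. \<alpha> l + \<beta> l) = 1" unfolding \<alpha>_def \<beta>_def n_def by simp
  have "(\<Sum>l\<in>UNIV. \<alpha> l *\<^sub>R (q + N *\<^sub>R axis l 1) + \<beta> l *\<^sub>R (q - N *\<^sub>R axis l 1))
      = (\<Sum>l\<in>UNIV. (\<alpha> l + \<beta> l) *\<^sub>R q + ((\<alpha> l - \<beta> l) * N) *\<^sub>R axis l 1)"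
    by (rule sum.cong) (auto simp: algebra_simps)
  also have "\<dots> = (\<Sum>l\<in>UNIV. \<alpha> l + \<beta> l) *\<^sub>R q + (\<Sum>l\<in>UNIV. (d$l) *\<^sub>R axis l 1)"
  proof -
    have "(\<alpha> l - \<beta> l) * N = d$l" for l unfolding \<alpha>_def \<beta>_def using N0 by (simp add: field_simps)
    then show ?thesis by (simp add: sum.distrib scaleR_sum_left[symmetric])
  qed
  also have "\<dots> = q + d" using sum1 by (simp add: vector_sum_axis)
  finally show "q + d = (\<Sum>l\<in>UNIV. \<alpha> l *\<^sub>R (q + N *\<^sub>R axis l 1) + \<beta> l *\<^sub>R (q - N *\<^sub>R axis l 1))" ..
qed

lemma lattice_convex_decomposition:
  fixes w :: "real^'n"
  assumes h: "h > 0"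
  defines "N \<equiv> real CARD('n) * h"
  obtains vp vm \<alpha> \<beta> where
    "\<And>l. vp l \<in> range (lattice_point h)" "\<And>l. vm l \<in> range (lattice_point h)"
    "\<And>l. dist (vp l) w \<le> 2 * N" "\<And>l. dist (vm l) w \<le> 2 * N"
    "\<And>l. vp l - vm l = (2 * N) *\<^sub>R axis l 1"
    "\<And>l. 0 \<le> \<alpha> l" "\<And>l. 0 \<le> \<beta> l" "(\<Sum>l\<in>UNIV. \<alpha> l + \<beta> l) = 1"
    "w = (\<Sum>l\<in>UNIV. \<alpha> l *\<^sub>R vp l + \<beta> l *\<^sub>R vm l)"
proof -
  define z0 where "z0 l = \<lfloor>w$l / h\<rfloor>" for l
  define q where "q = lattice_point h z0"
  define d where "d = w - q"
  have d: "0 \<le> d$l" "d$l \<le> h" for l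
  proof -
    have "of_int \<lfloor>w$l / h\<rfloor> * h \<le> w$l" using floor_divide_lower[OF h] .
    moreover have "w$l < (of_int \<lfloor>w$l / h\<rfloor> + 1) * h" using floor_divide_upper[OF h] .
    ultimately show "0 \<le> d$l" "d$l \<le> h"
      unfolding d_def q_def lattice_point_def z0_def by (auto simp: algebra_simps)
  qed
  have near: "norm (q - w) \<le> N"
  proof -
    have "norm (q - w) = norm d" unfolding d_def by (simp add: norm_minus_commute)
    also have "\<dots> \<le> (\<Sum>l\<in>UNIV. \<bar>d$l\<bar>)" by (rule norm_le_l1_cart)
    also have "\<dots> \<le> (\<Sum>l\<in>(UNIV::'n set). h)" by (rule sum_mono) (use d in auto)
    finally show ?thesis unfolding N_def by simp
  qed
  define vp where "vp l = q + N *\<^sub>R axis l 1" for l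
  define vm where "vm l = q - N *\<^sub>R axis l 1" for l
  obtain \<alpha> \<beta> where "\<And>l. 0 \<le> \<alpha> l" "\<And>l. 0 \<le> \<beta> l" "(\<Sum>l\<in>UNIV. \<alpha> l + \<beta> l) = 1"
    and "q + d = (\<Sum>l\<in>UNIV. \<alpha> l *\<^sub>R vp l + \<beta> l *\<^sub>R vm l)"
    using cube_in_cross_polytope[OF h d, of q] unfolding vp_def vm_def N_def by blast
  note cross = this
  have lat: "vp l \<in> range (lattice_point h)" "vm l \<in> range (lattice_point h)" for l
  proof -
    have N: "N = h * of_int (int CARD('n))" unfolding N_def by simp
    have "vp l = lattice_point h (\<lambda>l'. z0 l' + (if l' = l then int CARD('n) else 0))"
      by (simp add: vp_def q_def lattice_point_def vec_eq_iff axis_def N algebra_simps)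
    moreover have "vm l = lattice_point h (\<lambda>l'. z0 l' - (if l' = l then int CARD('n) else 0))"
      by (simp add: vm_def q_def lattice_point_def vec_eq_iff axis_def N algebra_simps)
    ultimately show "vp l \<in> range (lattice_point h)" "vm l \<in> range (lattice_point h)" by auto
  qed
  have dist: "dist (vp l) w \<le> 2 * N" "dist (vm l) w \<le> 2 * N" for l
  proof -
    have "N \<ge> 0" unfolding N_def using h by simp
    then have "norm (N *\<^sub>R axis l (1::real)) \<le> N" by simp
    then show "dist (vp l) w \<le> 2 * N" "dist (vm l) w \<le> 2 * N"
      unfolding vp_def vm_def dist_norm
      using near norm_triangle_ineq[of "q - w" "N *\<^sub>R axis l 1"]
        norm_triangle_ineq4[of "q - w" "N *\<^sub>R axis l 1"]
      by (simp_all add: algebra_simps)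
  qed
  have diff: "vp l - vm l = (2 * N) *\<^sub>R axis l 1" for l
    by (simp add: vp_def vm_def scaleR_left_distrib[symmetric])
  have "w = q + d" unfolding d_def by simp
  with cross(4) have "w = (\<Sum>l\<in>UNIV. \<alpha> l *\<^sub>R vp l + \<beta> l *\<^sub>R vm l)" by simp
  from that[OF lat dist diff cross(1-3) this] show thesis .
qed

lemma finite_bounded_lattice_points:
  assumes "h > 0"
  shows "finite {g \<in> range (lattice_point h). norm g \<le> B}"
proof (rule finite_subset)
  define L where "L = \<lceil>B / h\<rceil>"
  show "{g \<in> range (lattice_point h). norm g \<le> B} \<subseteq> lattice_point h ` (PiE UNIV (\<lambda>_. {-L..L}))"
  proof
    fix g assume "g \<in> {g \<in> range (lattice_point h). norm g \<le> B}"
    then obtain z where g: "g = lattice_point h z" "norm g \<le> B" by auto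
    have "z l \<in> {-L..L}" for l
    proof -
      have "\<bar>h * of_int (z l)\<bar> \<le> B"
        using component_le_norm_cart[of g l] g unfolding lattice_point_def by simp
      then have "of_int \<bar>z l\<bar> \<le> B / h" using assms by (simp add: abs_mult field_simps)
      also have "\<dots> \<le> of_int L" unfolding L_def by simp
      finally have "\<bar>z l\<bar> \<le> L" by linarith
      then show ?thesis by auto
    qed
    then show "g \<in> lattice_point h ` (PiE UNIV (\<lambda>_. {-L..L}))" using g by (auto simp: PiE_UNIV_domain)
  qed
  show "finite (lattice_point h ` (PiE UNIV (\<lambda>_. {-L..L})))" by (intro finite_imageI finite_PiE) auto
qed

lemma convex_combination_as_coefficients:
  fixes vp vm :: "'l::finite \<Rightarrow> 'v::real_vector"
  assumes "finite G" "\<And>l. vp l \<in> G" "\<And>l. vm l \<in> G" "\<And>l. 0 \<le> \<alpha> l" "\<And>l. 0 \<le> \<beta> l"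
    "(\<Sum>l\<in>UNIV. \<alpha> l + \<beta> l) = 1"
  obtains a where "\<forall>g\<in>G. 0 \<le> a g \<and> a g \<le> 1"
    "(\<Sum>l\<in>UNIV. \<alpha> l *\<^sub>R vp l + \<beta> l *\<^sub>R vm l) = (\<Sum>g\<in>G. a g *\<^sub>R g)"
proof
  define a where "a g = (\<Sum>l\<in>UNIV. (if g = vp l then \<alpha> l else 0) + (if g = vm l then \<beta> l else 0))" for g
  show "\<forall>g\<in>G. 0 \<le> a g \<and> a g \<le> 1"
  proof (intro ballI conjI)
    fix g
    show "0 \<le> a g" unfolding a_def using assms(4,5) by (intro sum_nonneg) auto
    have "a g \<le> (\<Sum>l\<in>UNIV. \<alpha> l + \<beta> l)" unfolding a_def using assms(4,5) by (intro sum_mono) auto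
    then show "a g \<le> 1" using assms(6) by simp
  qed
  have "(\<Sum>g\<in>G. a g *\<^sub>R g) = (\<Sum>l\<in>UNIV. \<Sum>g\<in>G.
      (if g = vp l then \<alpha> l *\<^sub>R g else 0) + (if g = vm l then \<beta> l *\<^sub>R g else 0))"
    unfolding a_def scaleR_sum_left
    by (subst sum.swap) (simp add: scaleR_add_left if_distrib[of "\<lambda>c. c *\<^sub>R _"] cong: if_cong)
  also have "\<dots> = (\<Sum>l\<in>UNIV. \<alpha> l *\<^sub>R vp l + \<beta> l *\<^sub>R vm l)"
    using assms(1-3) by (simp add: sum.distrib sum.delta)
  finally show "(\<Sum>l\<in>UNIV. \<alpha> l *\<^sub>R vp l + \<beta> l *\<^sub>R vm l) = (\<Sum>g\<in>G. a g *\<^sub>R g)" ..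
qed

lemma finite_grid_in_cone:
  fixes C :: "(real^'n) set"
  assumes \<rho>: "\<rho> > 0" and y: "cball y \<rho> \<subseteq> C" "norm y \<le> \<Lambda>"
  obtains G where "finite G" "G \<noteq> {}" "G \<subseteq> C" "span G = UNIV"
    "\<And>w. cball w \<rho> \<subseteq> C \<Longrightarrow> norm w \<le> \<Lambda> \<Longrightarrow>
       \<exists>\<alpha>. (\<forall>g\<in>G. 0 \<le> \<alpha> g \<and> \<alpha> g \<le> 1) \<and> w = (\<Sum>g\<in>G. \<alpha> g *\<^sub>R g)"
proof -
  define h where "h = \<rho> / (4 * real CARD('n))"
  have h0: "h > 0" unfolding h_def using \<rho> by simp
  have N: "2 * (real CARD('n) * h) = \<rho> / 2" unfolding h_def by simp
  define G where "G = {g\<in>C. norm g \<le> \<Lambda> + \<rho> \<and> g \<in> range (lattice_point h)}"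
  have fin: "finite G"
    by (rule finite_subset[OF _ finite_bounded_lattice_points[OF h0, of "\<Lambda> + \<rho>"]]) (auto simp: G_def)
  have decomp: "\<exists>(vp :: 'n \<Rightarrow> real^'n) vm (\<alpha> :: 'n \<Rightarrow> real) \<beta>. (\<forall>l. vp l \<in> G \<and> vm l \<in> G \<and> 0 \<le> \<alpha> l \<and> 0 \<le> \<beta> l
      \<and> vp l - vm l = (\<rho> / 2) *\<^sub>R axis l 1) \<and> (\<Sum>l\<in>UNIV. \<alpha> l + \<beta> l) = 1
      \<and> w = (\<Sum>l\<in>UNIV. \<alpha> l *\<^sub>R vp l + \<beta> l *\<^sub>R vm l)"
    if w: "cball w \<rho> \<subseteq> C" "norm w \<le> \<Lambda>" for w
  proof -
    obtain vp vm \<alpha> \<beta> where lat: "\<And>l. vp l \<in> range (lattice_point h)" "\<And>l. vm l \<in> range (lattice_point h)"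
      and dist: "\<And>l. dist (vp l) w \<le> \<rho> / 2" "\<And>l. dist (vm l) w \<le> \<rho> / 2"
      and rest: "\<And>l. vp l - vm l = (\<rho> / 2) *\<^sub>R axis l 1"
        "\<And>l. 0 \<le> \<alpha> l" "\<And>l. 0 \<le> \<beta> l" "(\<Sum>l\<in>UNIV. \<alpha> l + \<beta> l) = 1"
        "w = (\<Sum>l\<in>UNIV. \<alpha> l *\<^sub>R vp l + \<beta> l *\<^sub>R vm l)"
      by (rule lattice_convex_decomposition[OF h0, of w, unfolded N]) blast
    have "v \<in> G" if "v \<in> range (lattice_point h)" "dist v w \<le> \<rho> / 2" for v
    proof -
      have "v \<in> C" using w(1) that(2) \<rho> by (auto simp: dist_commute subset_iff)
      moreover have "norm v \<le> \<Lambda> + \<rho>"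
        using that(2) w(2) norm_triangle_ineq2[of v w] \<rho> by (simp add: dist_norm)
      ultimately show ?thesis using that(1) unfolding G_def by blast
    qed
    then show ?thesis using lat dist rest(1-4)
      by (intro exI[of _ vp] exI[of _ vm] exI[of _ \<alpha>] exI[of _ \<beta>] conjI allI rest(5)) auto
  qed
  show thesis
  proof
    show "finite G" by (rule fin)
    show "G \<subseteq> C" unfolding G_def by auto
    obtain vp vm :: "'n \<Rightarrow> real^'n" where pairs: "\<forall>l. vp l \<in> G \<and> vm l \<in> G \<and> vp l - vm l = (\<rho> / 2) *\<^sub>R axis l 1"
      using decomp[OF y] by blast
    then show "G \<noteq> {}" by blast
    have "axis l 1 \<in> span G" for l
    proof -
      have "vp l - vm l \<in> span G" using pairs by (intro span_diff span_base) auto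
      then have "(2 / \<rho>) *\<^sub>R (vp l - vm l) \<in> span G" by (rule span_mul)
      then show ?thesis using pairs \<rho> by simp
    qed
    then have "v \<in> span G" for v
      by (subst vector_sum_axis[symmetric]) (intro span_sum span_mul)
    then show "span G = UNIV" by auto
  next
    fix w assume "cball w \<rho> \<subseteq> C" "norm w \<le> \<Lambda>"
    then obtain vp vm :: "'n \<Rightarrow> real^'n" and \<alpha> \<beta> :: "'n \<Rightarrow> real"
      where P: "\<forall>l. vp l \<in> G \<and> vm l \<in> G \<and> 0 \<le> \<alpha> l \<and> 0 \<le> \<beta> l
        \<and> vp l - vm l = (\<rho> / 2) *\<^sub>R axis l 1"
        and S: "(\<Sum>l\<in>UNIV. \<alpha> l + \<beta> l) = 1" and W: "w = (\<Sum>l\<in>UNIV. \<alpha> l *\<^sub>R vp l + \<beta> l *\<^sub>R vm l)"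
      using decomp by blast
    obtain a where "\<forall>g\<in>G. 0 \<le> a g \<and> a g \<le> 1"
      "(\<Sum>l\<in>UNIV. \<alpha> l *\<^sub>R vp l + \<beta> l *\<^sub>R vm l) = (\<Sum>g\<in>G. a g *\<^sub>R g)"
      by (rule convex_combination_as_coefficients[where vp=vp and vm=vm and \<alpha>=\<alpha> and \<beta>=\<beta>, OF fin _ _ _ _ S])
        (use P in auto)
    with W show "\<exists>\<alpha>. (\<forall>g\<in>G. 0 \<le> \<alpha> g \<and> \<alpha> g \<le> 1) \<and> w = (\<Sum>g\<in>G. \<alpha> g *\<^sub>R g)"
      by (intro exI[of _ a]) simp
  qed
qed

text \<open>A point deep inside C is a combination of the grid G whose coefficients are bounded below
  uniformly: shift it by a small multiple of the strictly positive combination y, decompose the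
  shifted point, and shift back.\<close>

lemma deep_point_positive_combination:
  fixes C :: "(real^'n) set"
  assumes rep: "\<And>w. cball w \<rho> \<subseteq> C \<Longrightarrow> norm w \<le> \<Lambda> \<Longrightarrow>
      \<exists>\<alpha>. (\<forall>g\<in>G. 0 \<le> \<alpha> g \<and> \<alpha> g \<le> 1) \<and> w = (\<Sum>g\<in>G. \<alpha> g *\<^sub>R g)"
    and "\<rho> \<ge> 0" and \<mu>: "\<forall>g\<in>G. \<tau> \<le> \<mu> g \<and> \<mu> g \<le> M" "y = (\<Sum>g\<in>G. \<mu> g *\<^sub>R g)"
    and z: "cball z (2 * \<rho>) \<subseteq> C" "norm z + \<rho> \<le> \<Lambda>"
  defines "s \<equiv> \<rho> / (norm y + 1)"
  obtains \<kappa> where "\<forall>g\<in>G. s * \<tau> \<le> \<kappa> g \<and> \<kappa> g \<le> 1 + s * M" "z = (\<Sum>g\<in>G. \<kappa> g *\<^sub>R g)"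
proof -
  have "0 < norm y + 1" by (simp add: add_nonneg_pos)
  then have s: "s \<ge> 0" "s * norm y \<le> \<rho>"
    unfolding s_def using \<open>\<rho> \<ge> 0\<close> by (simp_all add: field_simps)
  define w where "w = z - s *\<^sub>R y"
  have "dist z w \<le> \<rho>" unfolding w_def dist_norm using s by simp
  have "cball w \<rho> \<subseteq> cball z (2 * \<rho>)"
  proof
    fix p assume "p \<in> cball w \<rho>"
    then have "dist w p \<le> \<rho>" by simp
    with \<open>dist z w \<le> \<rho>\<close> dist_triangle[of z p w] show "p \<in> cball z (2 * \<rho>)" by simp
  qed
  then have "cball w \<rho> \<subseteq> C" using z(1) by blast
  moreover have "norm w \<le> \<Lambda>"
    using norm_triangle_ineq4[of z "s *\<^sub>R y"] s z(2) unfolding w_def by simp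
  ultimately obtain \<alpha> where \<alpha>: "\<forall>g\<in>G. 0 \<le> \<alpha> g \<and> \<alpha> g \<le> 1" "w = (\<Sum>g\<in>G. \<alpha> g *\<^sub>R g)"
    using rep by blast
  show thesis
  proof
    show "\<forall>g\<in>G. s * \<tau> \<le> \<alpha> g + s * \<mu> g \<and> \<alpha> g + s * \<mu> g \<le> 1 + s * M"
      using \<alpha>(1) \<mu>(1) s(1) by (auto intro: add_mono add_increasing mult_left_mono)
    have "z = w + s *\<^sub>R y" unfolding w_def by simp
    then show "z = (\<Sum>g\<in>G. (\<alpha> g + s * \<mu> g) *\<^sub>R g)"
      by (simp add: \<alpha>(2) \<mu>(2) scaleR_add_left sum.distrib scaleR_sum_right)
  qed
qed

lemma cone_cball_scaleR:
  fixes C :: "'a::real_normed_vector set"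
  assumes "cone C" "c > 0" "cball z (c * r) \<subseteq> C"
  shows "cball ((1 / c) *\<^sub>R z) r \<subseteq> C"
proof
  fix p assume "p \<in> cball ((1 / c) *\<^sub>R z) r"
  then have "norm (p - (1 / c) *\<^sub>R z) \<le> r" by (simp add: dist_norm norm_minus_commute)
  moreover have "z - c *\<^sub>R p = (- c) *\<^sub>R (p - (1 / c) *\<^sub>R z)"
    using assms(2) by (simp add: algebra_simps)
  ultimately have "dist z (c *\<^sub>R p) \<le> c * r"
    using assms(2) by (simp add: dist_norm mult_left_mono)
  then have "c *\<^sub>R p \<in> C" using assms(3) by auto
  then have "(1 / c) *\<^sub>R (c *\<^sub>R p) \<in> C" using assms(1,2) unfolding cone_def by (meson less_imp_le zero_le_divide_1_iff)
  then show "p \<in> C" using assms(2) by simp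
qed

lemma contract_left_positive_combination:
  fixes CB :: "(real^'b) set" and x :: "real^('a::finite \<times> 'b)"
  assumes "cone CB"
    and rep: "\<And>w. cball w \<rho> \<subseteq> CB \<Longrightarrow> norm w \<le> \<Lambda> \<Longrightarrow>
      \<exists>\<alpha>. (\<forall>g\<in>G. 0 \<le> \<alpha> g \<and> \<alpha> g \<le> 1) \<and> w = (\<Sum>g\<in>G. \<alpha> g *\<^sub>R g)"
    and "\<rho> \<ge> 0" and \<mu>: "\<forall>g\<in>G. \<tau> \<le> \<mu> g \<and> \<mu> g \<le> M" "y = (\<Sum>g\<in>G. \<mu> g *\<^sub>R g)"
    and ball: "cball (contract_left x u) (\<zeta> * norm u) \<subseteq> CB" "2 * \<rho> \<le> \<zeta>" and "u \<noteq> 0"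
    and \<Lambda>: "(\<Sum>j\<in>UNIV. \<Sum>i\<in>UNIV. \<bar>x$(i,j)\<bar>) + \<rho> \<le> \<Lambda>"
  defines "s \<equiv> \<rho> / (norm y + 1)"
  shows "\<exists>\<kappa>. (\<forall>h\<in>G. s * \<tau> * norm u \<le> \<kappa> h \<and> \<kappa> h \<le> (1 + s * M) * norm u)
    \<and> contract_left x u = (\<Sum>h\<in>G. \<kappa> h *\<^sub>R h)"
proof -
  define z where "z = (1 / norm u) *\<^sub>R contract_left x u"
  have "norm u > 0" using \<open>u \<noteq> 0\<close> by simp
  have "cball (contract_left x u) (norm u * (2 * \<rho>)) \<subseteq> CB"
    using ball \<open>norm u > 0\<close> by (intro subset_trans[OF subset_cball ball(1)]) (simp add: mult.commute)
  then have "cball z (2 * \<rho>) \<subseteq> CB" unfolding z_def by (rule cone_cball_scaleR[OF assms(1) \<open>norm u > 0\<close>])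
  moreover have "norm z \<le> (\<Sum>j\<in>UNIV. \<Sum>i\<in>UNIV. \<bar>x$(i,j)\<bar>)"
    using norm_contract_left_le[of x u] \<open>norm u > 0\<close> unfolding z_def by (simp add: divide_le_eq)
  then have "norm z + \<rho> \<le> \<Lambda>" using \<Lambda> by linarith
  ultimately obtain \<kappa> where \<kappa>: "\<forall>g\<in>G. s * \<tau> \<le> \<kappa> g \<and> \<kappa> g \<le> 1 + s * M" "z = (\<Sum>g\<in>G. \<kappa> g *\<^sub>R g)"
    using deep_point_positive_combination[OF rep \<open>\<rho> \<ge> 0\<close> \<mu>] unfolding s_def by blast
  have "contract_left x u = norm u *\<^sub>R z" unfolding z_def using \<open>norm u > 0\<close> by simp
  then have "contract_left x u = (\<Sum>h\<in>G. (norm u * \<kappa> h) *\<^sub>R h)" by (simp add: \<kappa>(2) scaleR_sum_right)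
  moreover have "\<forall>h\<in>G. s * \<tau> * norm u \<le> norm u * \<kappa> h \<and> norm u * \<kappa> h \<le> (1 + s * M) * norm u"
    using \<kappa>(1) \<open>norm u > 0\<close> by (simp add: mult.commute)
  ultimately show ?thesis by (intro exI[of _ "\<lambda>h. norm u * \<kappa> h"]) simp
qed

lemma interior_positive_frame:
  fixes CA :: "(real^'a) set" and CB :: "(real^'b) set" and x :: "real^('a \<times> 'b)"
  assumes CB: "convex CB" "closed CB" "cone CB" "CB \<noteq> {}"
    and "\<zeta> > 0" "cball y \<zeta> \<subseteq> CB" "cball x \<zeta> \<subseteq> max_tensor CA CB"
  obtains G R \<mu> \<tau> M cc Ck where "finite G" "G \<noteq> {}" "G \<subseteq> CB"
    "\<And>g. linear (R g)" "\<And>v. (\<Sum>g\<in>G. R g v *\<^sub>R g) = v"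
    "\<forall>g\<in>G. \<tau> \<le> \<mu> g \<and> \<mu> g \<le> M" "\<tau> > 0" "y = (\<Sum>g\<in>G. \<mu> g *\<^sub>R g)" "cc > 0" "Ck > 0"
    "\<And>u. \<forall>a\<in>CA. 0 \<le> u \<bullet> a \<Longrightarrow> u \<noteq> 0 \<Longrightarrow> \<exists>\<kappa>. (\<forall>h\<in>G. cc * norm u \<le> \<kappa> h \<and> \<kappa> h \<le> Ck * norm u)
      \<and> contract_left x u = (\<Sum>h\<in>G. \<kappa> h *\<^sub>R h)"
proof -
  define \<rho> where "\<rho> = \<zeta> / 2"
  define \<Lambda> where "\<Lambda> = (\<Sum>j\<in>UNIV. \<Sum>i\<in>UNIV. \<bar>x$(i,j)\<bar>) + norm y + \<rho>"
  have \<rho>: "\<rho> > 0" "2 * \<rho> \<le> \<zeta>" "cball y (2 * \<rho>) \<subseteq> CB" "norm y + \<rho> \<le> \<Lambda>"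
    "(\<Sum>j\<in>UNIV. \<Sum>i\<in>UNIV. \<bar>x$(i,j)\<bar>) + \<rho> \<le> \<Lambda>"
    using assms(5,6) unfolding \<rho>_def \<Lambda>_def by (auto simp: sum_nonneg)
  obtain G where G: "finite G" "G \<noteq> {}" "G \<subseteq> CB" "span G = UNIV"
    and rep: "\<And>w. cball w \<rho> \<subseteq> CB \<Longrightarrow> norm w \<le> \<Lambda> \<Longrightarrow>
      \<exists>\<alpha>. (\<forall>g\<in>G. 0 \<le> \<alpha> g \<and> \<alpha> g \<le> 1) \<and> w = (\<Sum>g\<in>G. \<alpha> g *\<^sub>R g)"
    using finite_grid_in_cone[OF \<rho>(1) subset_trans[OF subset_cball \<rho>(3)], of \<Lambda>] \<rho>(1,4) by auto
  obtain R where R: "\<And>g. linear (R g)" "\<And>v. (\<Sum>g\<in>G. R g v *\<^sub>R g) = v"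
    using spanning_set_coefficient_functionals[OF G(1,4)] by blast
  define s where "s = \<rho> / (norm (\<Sum>g\<in>G. 1 *\<^sub>R g) + 1)"
  obtain \<mu> where \<mu>: "\<forall>g\<in>G. s \<le> \<mu> g \<and> \<mu> g \<le> 1 + s" "y = (\<Sum>g\<in>G. \<mu> g *\<^sub>R g)"
    using deep_point_positive_combination[where \<mu>="\<lambda>_. 1" and \<tau>=1 and M=1, OF rep _ _ _ \<rho>(3,4)] \<rho>(1)
    unfolding s_def by auto
  define t where "t = \<rho> / (norm y + 1)"
  have "s > 0" "t > 0" unfolding s_def t_def using \<rho>(1) by (simp_all add: add_nonneg_pos)
  show thesis
  proof (rule that[OF G(1-3) R \<mu>(1) _ \<mu>(2), of "t * s" "1 + t * (1 + s)"])
    show "\<exists>\<kappa>. (\<forall>h\<in>G. t * s * norm u \<le> \<kappa> h \<and> \<kappa> h \<le> (1 + t * (1 + s)) * norm u)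
      \<and> contract_left x u = (\<Sum>h\<in>G. \<kappa> h *\<^sub>R h)" if "\<forall>a\<in>CA. 0 \<le> u \<bullet> a" "u \<noteq> 0" for u
      using contract_left_positive_combination[OF CB(3) rep _ \<mu>
          cball_contract_left_subset[OF CB assms(7,5) that(1)] \<rho>(2) that(2) \<rho>(5)] \<rho>(1)
      unfolding t_def by simp
  qed (use \<open>s > 0\<close> \<open>t > 0\<close> in \<open>auto intro: add_pos_nonneg\<close>)
qed

section \<open>Corrections that synthesise to zero\<close>

text \<open>For a finite spanning family G with linear coefficient functionals R, let \<Pi> be the
  projection \<nu> \<mapsto> R (\<Sum>h. \<nu> h h) of coefficient vectors and \<Pi>' its transpose. The defect is
  (I - \<Pi>') \<nu> and the correction is (I - \<Pi>)(I - \<Pi>') \<nu>: it synthesises to 0, yet pairs with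
  \<nu> to the nonnegative number |(I - \<Pi>') \<nu>|^2.\<close>

definition coeff_defect :: "'v set \<Rightarrow> ('v \<Rightarrow> 'v \<Rightarrow> real) \<Rightarrow> ('v \<Rightarrow> real) \<Rightarrow> 'v \<Rightarrow> real" where
  "coeff_defect G R \<nu> h = \<nu> h - (\<Sum>g\<in>G. \<nu> g * R g h)"

definition null_correction ::
  "'v::real_vector set \<Rightarrow> ('v \<Rightarrow> 'v \<Rightarrow> real) \<Rightarrow> ('v \<Rightarrow> real) \<Rightarrow> 'v \<Rightarrow> real" where
  "null_correction G R \<nu> g = coeff_defect G R \<nu> g - R g (\<Sum>h\<in>G. coeff_defect G R \<nu> h *\<^sub>R h)"

lemma synthesis_null_correction:
  assumes "\<And>v. (\<Sum>g\<in>G. R g v *\<^sub>R g) = v"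
  shows "(\<Sum>g\<in>G. null_correction G R \<nu> g *\<^sub>R g) = 0"
  unfolding null_correction_def by (simp add: scaleR_diff_left sum_subtractf assms)

lemma sum_mult_coefficients_synthesis:
  fixes R :: "'v::real_vector \<Rightarrow> 'v \<Rightarrow> real"
  assumes "\<And>g. linear (R g)"
  shows "(\<Sum>g\<in>G. \<nu> g * R g (\<Sum>h\<in>G. \<kappa> h *\<^sub>R h)) = (\<Sum>h\<in>G. \<kappa> h * (\<nu> h - coeff_defect G R \<nu> h))"
proof -
  have "(\<Sum>g\<in>G. \<nu> g * R g (\<Sum>h\<in>G. \<kappa> h *\<^sub>R h)) = (\<Sum>g\<in>G. \<Sum>h\<in>G. \<kappa> h * (\<nu> g * R g h))"
    by (simp add: linear_functional_sum_scaleR[OF assms] sum_distrib_left mult_ac)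
  also have "\<dots> = (\<Sum>h\<in>G. \<Sum>g\<in>G. \<kappa> h * (\<nu> g * R g h))" by (rule sum.swap)
  also have "\<dots> = (\<Sum>h\<in>G. \<kappa> h * (\<nu> h - coeff_defect G R \<nu> h))"
    unfolding coeff_defect_def by (simp add: sum_distrib_left)
  finally show ?thesis .
qed

lemma sum_mult_null_correction:
  fixes R :: "'v::real_vector \<Rightarrow> 'v \<Rightarrow> real"
  assumes "\<And>g. linear (R g)"
  shows "(\<Sum>g\<in>G. \<nu> g * null_correction G R \<nu> g) = (\<Sum>h\<in>G. (coeff_defect G R \<nu> h)^2)"
proof -
  let ?d = "coeff_defect G R \<nu>"
  have "(\<Sum>g\<in>G. \<nu> g * null_correction G R \<nu> g)
      = (\<Sum>g\<in>G. \<nu> g * ?d g) - (\<Sum>g\<in>G. \<nu> g * R g (\<Sum>h\<in>G. ?d h *\<^sub>R h))"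
    unfolding null_correction_def by (simp add: right_diff_distrib sum_subtractf)
  also have "(\<Sum>g\<in>G. \<nu> g * R g (\<Sum>h\<in>G. ?d h *\<^sub>R h)) = (\<Sum>h\<in>G. ?d h * (\<nu> h - ?d h))"
    by (rule sum_mult_coefficients_synthesis[OF assms])
  also have "(\<Sum>g\<in>G. \<nu> g * ?d g) - (\<Sum>h\<in>G. ?d h * (\<nu> h - ?d h)) = (\<Sum>h\<in>G. (?d h)^2)"
    by (simp add: right_diff_distrib sum_subtractf power2_eq_square mult.commute)
  finally show ?thesis .
qed

lemma coeff_defect_diff:
  "coeff_defect G R (\<lambda>g. \<nu>1 g - s * \<nu>2 g) h = coeff_defect G R \<nu>1 h - s * coeff_defect G R \<nu>2 h"
  unfolding coeff_defect_def by (simp add: algebra_simps sum_subtractf sum_distrib_left)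

lemma null_correction_diff:
  fixes R :: "'v::real_vector \<Rightarrow> 'v \<Rightarrow> real"
  assumes "\<And>g. linear (R g)"
  shows "null_correction G R (\<lambda>g. \<nu>1 g - s * \<nu>2 g) g
    = null_correction G R \<nu>1 g - s * null_correction G R \<nu>2 g"
proof -
  have "R g (\<Sum>h\<in>G. coeff_defect G R (\<lambda>g. \<nu>1 g - s * \<nu>2 g) h *\<^sub>R h)
      = R g (\<Sum>h\<in>G. coeff_defect G R \<nu>1 h *\<^sub>R h) - s * R g (\<Sum>h\<in>G. coeff_defect G R \<nu>2 h *\<^sub>R h)"
    unfolding linear_functional_sum_scaleR[OF assms] coeff_defect_diff
    by (simp add: algebra_simps sum_subtractf sum_distrib_left)
  then show ?thesis unfolding null_correction_def by (simp add: coeff_defect_diff algebra_simps)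
qed

section \<open>Symmetrisation\<close>

lemma sum_permutations_apply:
  assumes "finite S" "a \<in> S"
  shows "(\<Sum>\<sigma>\<in>{\<sigma>. \<sigma> permutes S}. (\<Phi>::_\<Rightarrow>real) (\<sigma> a)) = fact (card S - 1) * (\<Sum>p\<in>S. \<Phi> p)"
proof -
  have eqb: "(\<Sum>\<sigma>\<in>{\<sigma>. \<sigma> permutes S}. \<Phi> (\<sigma> a)) = (\<Sum>\<sigma>\<in>{\<sigma>. \<sigma> permutes S}. \<Phi> (\<sigma> b))" if "b \<in> S" for b
    using sum_permutations_compose_right[OF permutes_swap_id[OF assms(2) that], of "\<lambda>\<sigma>. \<Phi> (\<sigma> a)"]
    by simp
  have "(\<Sum>b\<in>S. \<Sum>\<sigma>\<in>{\<sigma>. \<sigma> permutes S}. \<Phi> (\<sigma> b)) = (\<Sum>b\<in>S. \<Sum>\<sigma>\<in>{\<sigma>. \<sigma> permutes S}. \<Phi> (\<sigma> a))"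
    by (rule sum.cong[OF refl]) (simp add: eqb)
  then have "real (card S) * (\<Sum>\<sigma>\<in>{\<sigma>. \<sigma> permutes S}. \<Phi> (\<sigma> a)) = (\<Sum>b\<in>S. \<Sum>\<sigma>\<in>{\<sigma>. \<sigma> permutes S}. \<Phi> (\<sigma> b))"
    by simp
  also have "\<dots> = (\<Sum>\<sigma>\<in>{\<sigma>. \<sigma> permutes S}. \<Sum>b\<in>S. \<Phi> (\<sigma> b))" by (rule sum.swap)
  also have "\<dots> = (\<Sum>\<sigma>\<in>{\<sigma>. \<sigma> permutes S}. \<Sum>p\<in>S. \<Phi> p)"
  proof (rule sum.cong[OF refl])
    fix \<sigma> assume "\<sigma> \<in> {\<sigma>. \<sigma> permutes S}"
    then have "\<sigma> permutes S" by simp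
    then show "(\<Sum>b\<in>S. \<Phi> (\<sigma> b)) = (\<Sum>p\<in>S. \<Phi> p)"
      using sum.permute[of \<sigma> S \<Phi>] by (simp add: comp_def)
  qed
  also have "\<dots> = fact (card S) * (\<Sum>p\<in>S. \<Phi> p)"
    using card_permutations[OF refl assms(1)] by simp
  finally have *: "real (card S) * (\<Sum>\<sigma>\<in>{\<sigma>. \<sigma> permutes S}. \<Phi> (\<sigma> a)) = fact (card S) * (\<Sum>p\<in>S. \<Phi> p)" .
  have cS: "card S > 0" using assms by (auto simp: card_gt_0_iff)
  then have "fact (card S) = real (card S) * fact (card S - 1)"
    using fact_reduce by blast
  with * cS show ?thesis by simp
qed

lemma id_tensor_sym_proj_x_tensor_ypow:
  fixes x :: "real^('a::finite \<times> 'b::finite)" and y :: "real^'b"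
  assumes len: "length js = k" and k1: "k \<ge> 1"
  shows "id_tensor_sym_proj k (x_tensor_ypow x y k) i js
    = (1 / real k) * (\<Sum>p<k. x$(i, js!p) * (\<Prod>q\<in>{..<k}-{p}. y$(js!q)))"
proof -
  define \<Phi> where "\<Phi> p = x$(i, js!p) * (\<Prod>q\<in>{..<k}-{p}. y$(js!q))" for p
  have U: "U_perm k \<sigma> (x_tensor_ypow x y k) i js = \<Phi> (\<sigma> 0)" if \<sigma>: "\<sigma> permutes {0..<k}" for \<sigma>
  proof -
    have "U_perm k \<sigma> (x_tensor_ypow x y k) i js
        = x$(i, js ! \<sigma> 0) * (\<Prod>m\<in>{1..<k}. y $ (js ! \<sigma> m))"
      using len k1 unfolding U_perm_def x_tensor_ypow_def by simp
    also have "(\<Prod>m\<in>{1..<k}. y $ (js ! \<sigma> m)) = (\<Prod>q\<in>{..<k}-{\<sigma> 0}. y$(js!q))"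
    proof -
      have inj: "inj_on \<sigma> {1..<k}" using permutes_inj[OF \<sigma>] by (auto intro: inj_on_subset)
      have "\<sigma> ` {0..<k} = {0..<k}" using permutes_image[OF \<sigma>] .
      moreover have "{1..<k} = {0..<k} - {0}" by auto
      ultimately have "\<sigma> ` {1..<k} = {..<k} - {\<sigma> 0}"
        using permutes_inj[OF \<sigma>] by (simp add: image_set_diff lessThan_atLeast0)
      then show ?thesis using prod.reindex[OF inj, of "\<lambda>q. y$(js!q)"] by (simp add: comp_def)
    qed
    finally show ?thesis unfolding \<Phi>_def .
  qed
  have "id_tensor_sym_proj k (x_tensor_ypow x y k) i js
      = (1 / fact k) * (\<Sum>\<sigma>\<in>{\<sigma>. \<sigma> permutes {0..<k}}. \<Phi> (\<sigma> 0))"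
    unfolding id_tensor_sym_proj_def using U by simp
  also have "\<dots> = (1 / fact k) * (fact (k - 1) * (\<Sum>p\<in>{0..<k}. \<Phi> p))"
    using sum_permutations_apply[of "{0..<k}" 0 \<Phi>] k1 by simp
  also have "\<dots> = (1 / real k) * (\<Sum>p<k. \<Phi> p)"
  proof -
    have "fact k = real k * fact (k - 1)" using fact_reduce[of k] k1 by simp
    then show ?thesis using k1 by (simp add: lessThan_atLeast0)
  qed
  finally show ?thesis unfolding \<Phi>_def .
qed

lemma id_tensor_sym_proj_length_neq:
  assumes "length js \<noteq> k"
  shows "id_tensor_sym_proj k T i js = 0"
  using assms unfolding id_tensor_sym_proj_def U_perm_def by simp

lemma prod_fun_upd_pivot:
  assumes "finite K" "p \<in> K"
  shows "(\<Prod>q\<in>K. F q ((t(p := g)) q)) = F p g * (\<Prod>q\<in>K-{p}. F q (t q))"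
proof -
  have "(\<Prod>q\<in>K-{p}. F q ((t(p := g)) q)) = (\<Prod>q\<in>K-{p}. F q (t q))" by (rule prod.cong) auto
  then show ?thesis using prod.remove[OF assms, of "\<lambda>q. F q ((t(p := g)) q)"] by simp
qed

lemma prod_sum_expand_PiE_pivot:
  fixes C :: "(nat \<Rightarrow> 'v) \<Rightarrow> 'v \<Rightarrow> real"
  assumes fin: "finite G" "finite K" and p: "p \<in> K"
    and A: "\<And>t. (\<Sum>g\<in>G. C t g * F p g) = a"
    and Cdep: "\<And>t t'. (\<forall>q\<in>K-{p}. t q = t' q) \<Longrightarrow> C t = C t'"
  shows "a * (\<Prod>q\<in>K-{p}. \<Sum>g\<in>G. m g * F q g)
    = (\<Sum>t\<in>PiE K (\<lambda>_. G). (\<Prod>q\<in>K-{p}. m (t q)) * C t (t p) * (\<Prod>q\<in>K. F q (t q)))"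
proof -
  let ?K' = "K - {p}"
  define f where "f t = (\<Prod>q\<in>K-{p}. m (t q)) * C t (t p) * (\<Prod>q\<in>K. F q (t q))" for t
  have "K = insert p ?K'" using p by auto
  then have "(\<Sum>t\<in>PiE K (\<lambda>_. G). f t) = (\<Sum>t\<in>(\<lambda>(y, g). g(p := y)) ` (G \<times> PiE ?K' (\<lambda>_. G)). f t)"
    by (metis PiE_insert_eq)
  also have "\<dots> = (\<Sum>g\<in>G. \<Sum>t'\<in>PiE ?K' (\<lambda>_. G). f (t'(p := g)))"
    by (subst sum.reindex[OF inj_combinator]) (simp_all add: case_prod_unfold sum.cartesian_product)
  also have "\<dots> = (\<Sum>g\<in>G. \<Sum>t'\<in>PiE ?K' (\<lambda>_. G).
        (\<Prod>q\<in>?K'. m (t' q) * F q (t' q)) * (C t' g * F p g))"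
  proof (intro sum.cong refl)
    fix g t' assume "t' \<in> PiE ?K' (\<lambda>_. G)"
    have "C (t'(p := g)) = C t'" by (rule Cdep) simp
    moreover have "(\<Prod>q\<in>?K'. m ((t'(p := g)) q)) = (\<Prod>q\<in>?K'. m (t' q))" by (rule prod.cong) auto
    ultimately show "f (t'(p := g)) = (\<Prod>q\<in>?K'. m (t' q) * F q (t' q)) * (C t' g * F p g)"
      unfolding f_def prod_fun_upd_pivot[OF fin(2) p] by (simp add: prod.distrib mult_ac)
  qed
  also have "\<dots> = (\<Sum>t'\<in>PiE ?K' (\<lambda>_. G). (\<Prod>q\<in>?K'. m (t' q) * F q (t' q)) * (\<Sum>g\<in>G. C t' g * F p g))"
    by (subst sum.swap) (simp add: sum_distrib_left)
  also have "\<dots> = (\<Sum>t'\<in>PiE ?K' (\<lambda>_. G). (\<Prod>q\<in>?K'. m (t' q) * F q (t' q))) * a"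
    by (simp add: A sum_distrib_right)
  also have "(\<Sum>t'\<in>PiE ?K' (\<lambda>_. G). (\<Prod>q\<in>?K'. m (t' q) * F q (t' q))) = (\<Prod>q\<in>?K'. \<Sum>g\<in>G. m g * F q g)"
    by (rule prod_sum_PiE[symmetric]) (use fin in auto)
  finally show ?thesis unfolding f_def by (simp add: mult_ac)
qed

definition visit_weight :: "nat \<Rightarrow> ('v \<Rightarrow> real) \<Rightarrow> (nat \<Rightarrow> 'v) \<Rightarrow> 'v \<Rightarrow> real" where
  "visit_weight k \<mu> t g = (\<Sum>q<k. if t q = g then 1 / \<mu> g else 0)"

definition visit_weight_except :: "nat \<Rightarrow> ('v \<Rightarrow> real) \<Rightarrow> (nat \<Rightarrow> 'v) \<Rightarrow> nat \<Rightarrow> 'v \<Rightarrow> real" where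
  "visit_weight_except k \<mu> t p g = (\<Sum>q\<in>{..<k}-{p}. if t q = g then 1 / \<mu> g else 0)"

lemma visit_weight_except_eq:
  assumes "p < k"
  shows "visit_weight_except k \<mu> t p = (\<lambda>g. visit_weight k \<mu> t g - (1 / \<mu> (t p)) * (if t p = g then 1 else 0))"
proof
  fix g
  have "visit_weight_except k \<mu> t p g = visit_weight k \<mu> t g - (if t p = g then 1 / \<mu> g else 0)"
    unfolding visit_weight_except_def visit_weight_def using assms by (simp add: sum_diff1)
  then show "visit_weight_except k \<mu> t p g = visit_weight k \<mu> t g - (1 / \<mu> (t p)) * (if t p = g then 1 else 0)"
    by auto
qed

lemma sum_visit_weight:
  assumes "finite G" "\<forall>q<k. t q \<in> G"
  shows "(\<Sum>p<k. f (t p) / \<mu> (t p)) = (\<Sum>g\<in>G. visit_weight k \<mu> t g * f g)"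
proof -
  have "(\<Sum>g\<in>G. visit_weight k \<mu> t g * f g) = (\<Sum>g\<in>G. \<Sum>q<k. if t q = g then f g / \<mu> g else 0)"
    unfolding visit_weight_def sum_distrib_right by (intro sum.cong refl) auto
  also have "\<dots> = (\<Sum>q<k. \<Sum>g\<in>G. if t q = g then f g / \<mu> g else 0)" by (rule sum.swap)
  also have "\<dots> = (\<Sum>q<k. f (t q) / \<mu> (t q))"
    by (intro sum.cong refl) (use assms in \<open>simp add: sum.delta'\<close>)
  finally show ?thesis by simp
qed

lemma sum_visit_weight_lower:
  assumes "finite G" "\<forall>q<k. t q \<in> G" "\<forall>g\<in>G. 0 < \<mu> g \<and> \<mu> g \<le> M"
  shows "real k / M \<le> (\<Sum>g\<in>G. visit_weight k \<mu> t g)"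
proof -
  have "(\<Sum>g\<in>G. visit_weight k \<mu> t g) = (\<Sum>p<k. 1 / \<mu> (t p))"
    using sum_visit_weight[OF assms(1,2), of "\<lambda>_. 1" \<mu>] by simp
  also have "\<dots> \<ge> (\<Sum>p<k. 1 / M)"
  proof (rule sum_mono)
    fix p assume "p \<in> {..<k}"
    then have "t p \<in> G" using assms(2) by simp
    then show "1 / M \<le> 1 / \<mu> (t p)" using assms(3) by (simp add: frac_le)
  qed
  finally show ?thesis by simp
qed

text \<open>The
  coefficient family c is corrected by the visit weights of the tuple with the position p itself left
  out, so the correction used at position p depends only on the other positions; this is what lets the
  symmetrised tensor still expand over tuples.\<close>
definition sym_coeff ::
  "nat \<Rightarrow> ('v \<Rightarrow> real) \<Rightarrow> (('v \<Rightarrow> real) \<Rightarrow> 'v \<Rightarrow> 'w::real_vector) \<Rightarrow> (nat \<Rightarrow> 'v) \<Rightarrow> 'w" where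
  "sym_coeff k \<mu> c t = (1 / real k) *\<^sub>R
     (\<Sum>p<k. (\<Prod>q\<in>{..<k}-{p}. \<mu> (t q)) *\<^sub>R c (visit_weight_except k \<mu> t p) (t p))"

lemma entry_prod_expansion_PiE:
  fixes x :: "real^('a::finite \<times> 'b::finite)" and y :: "real^'b"
    and c :: "(real^'b \<Rightarrow> real) \<Rightarrow> real^'b \<Rightarrow> real^'a"
  assumes "finite G" and y: "y = (\<Sum>g\<in>G. \<mu> g *\<^sub>R g)"
    and x: "\<And>\<nu> i j. x$(i,j) = (\<Sum>g\<in>G. (c \<nu> g)$i * g$j)" and "p < k"
  shows "x$(i, js!p) * (\<Prod>q\<in>{..<k}-{p}. y$(js!q))
    = (\<Sum>t\<in>PiE {..<k} (\<lambda>_. G). (\<Prod>q\<in>{..<k}-{p}. \<mu> (t q))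
        * c (visit_weight_except k \<mu> t p) (t p) $ i * (\<Prod>q<k. t q $ (js!q)))"
proof -
  have "y$(js!q) = (\<Sum>g\<in>G. \<mu> g * g $ (js!q))" for q
    unfolding y by (simp add: sum_component)
  then have "x$(i, js!p) * (\<Prod>q\<in>{..<k}-{p}. y$(js!q))
      = x$(i, js!p) * (\<Prod>q\<in>{..<k}-{p}. \<Sum>g\<in>G. \<mu> g * g $ (js!q))" by simp
  also have "\<dots> = (\<Sum>t\<in>PiE {..<k} (\<lambda>_. G). (\<Prod>q\<in>{..<k}-{p}. \<mu> (t q))
        * c (visit_weight_except k \<mu> t p) (t p) $ i * (\<Prod>q<k. t q $ (js!q)))"
  proof (rule prod_sum_expand_PiE_pivot[where C = "\<lambda>t g. c (visit_weight_except k \<mu> t p) g $ i"])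
    show "(\<Sum>g\<in>G. c (visit_weight_except k \<mu> t p) g $ i * g $ (js!p)) = x$(i, js!p)" for t
      by (rule x[symmetric])
    show "(\<lambda>g. c (visit_weight_except k \<mu> t p) g $ i) = (\<lambda>g. c (visit_weight_except k \<mu> t' p) g $ i)"
      if "\<forall>q\<in>{..<k}-{p}. t q = t' q" for t t'
    proof -
      have "visit_weight_except k \<mu> t p = visit_weight_except k \<mu> t' p"
        unfolding visit_weight_except_def using that by (intro ext sum.cong) auto
      then show ?thesis by simp
    qed
  qed (use assms in auto)
  finally show ?thesis .
qed

lemma id_tensor_sym_proj_expansion:
  fixes x :: "real^('a::finite \<times> 'b::finite)" and y :: "real^'b"
    and c :: "(real^'b \<Rightarrow> real) \<Rightarrow> real^'b \<Rightarrow> real^'a"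
  assumes "finite G" and "k \<ge> 1" and y: "y = (\<Sum>g\<in>G. \<mu> g *\<^sub>R g)"
    and x: "\<And>\<nu> i j. x$(i,j) = (\<Sum>g\<in>G. (c \<nu> g)$i * g$j)"
  shows "id_tensor_sym_proj k (x_tensor_ypow x y k)
    = (\<lambda>i js. \<Sum>t\<in>PiE {..<k} (\<lambda>_. G). elem_tensor (sym_coeff k \<mu> c t) (map t [0..<k]) i js)"
proof (intro ext)
  fix i js
  let ?T = "PiE {..<k} (\<lambda>_. G)"
  let ?D = "\<lambda>t. (\<Sum>p<k. (\<Prod>q\<in>{..<k}-{p}. \<mu> (t q)) * c (visit_weight_except k \<mu> t p) (t p) $ i)"
  show "id_tensor_sym_proj k (x_tensor_ypow x y k) i js
    = (\<Sum>t\<in>?T. elem_tensor (sym_coeff k \<mu> c t) (map t [0..<k]) i js)"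
  proof (cases "length js = k")
    case False
    then show ?thesis by (simp add: id_tensor_sym_proj_length_neq elem_tensor_def)
  next
    case len: True
    have "id_tensor_sym_proj k (x_tensor_ypow x y k) i js
        = (1 / real k) * (\<Sum>p<k. x$(i, js!p) * (\<Prod>q\<in>{..<k}-{p}. y$(js!q)))"
      by (rule id_tensor_sym_proj_x_tensor_ypow[OF len \<open>k \<ge> 1\<close>])
    also have "\<dots> = (1 / real k) * (\<Sum>p<k. \<Sum>t\<in>?T. (\<Prod>q\<in>{..<k}-{p}. \<mu> (t q))
        * c (visit_weight_except k \<mu> t p) (t p) $ i * (\<Prod>q<k. t q $ (js!q)))"
      by (intro arg_cong[where f="\<lambda>s. 1 / real k * s"] sum.cong refl)
        (rule entry_prod_expansion_PiE[OF \<open>finite G\<close> y x], simp)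
    also have "\<dots> = (\<Sum>t\<in>?T. (1 / real k) * ?D t * (\<Prod>q<k. t q $ (js!q)))"
      by (subst sum.swap) (simp add: sum_distrib_left sum_distrib_right mult.assoc)
    also have "\<dots> = (\<Sum>t\<in>?T. elem_tensor (sym_coeff k \<mu> c t) (map t [0..<k]) i js)"
    proof (intro sum.cong refl)
      fix t :: "nat \<Rightarrow> real^'b"
      have "(\<Prod>m<length (map t [0..<k]). map t [0..<k] ! m $ (js ! m)) = (\<Prod>q<k. t q $ (js!q))"
        by (intro prod.cong) auto
      moreover have "sym_coeff k \<mu> c t $ i = (1 / real k) * ?D t"
        unfolding sym_coeff_def by (simp add: sum_component)
      ultimately show "(1 / real k) * ?D t * (\<Prod>q<k. t q $ (js!q))
          = elem_tensor (sym_coeff k \<mu> c t) (map t [0..<k]) i js"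
        unfolding elem_tensor_def using len by simp
    qed
    finally show ?thesis .
  qed
qed

lemma sym_coeff_eq_scaleR:
  assumes "\<And>q. q < k \<Longrightarrow> \<mu> (t q) \<noteq> 0"
  shows "sym_coeff k \<mu> c t = ((\<Prod>q<k. \<mu> (t q)) / real k) *\<^sub>R
    (\<Sum>p<k. (1 / \<mu> (t p)) *\<^sub>R c (visit_weight_except k \<mu> t p) (t p))"
proof -
  have "(\<Prod>q\<in>{..<k}-{p}. \<mu> (t q)) = (\<Prod>q<k. \<mu> (t q)) / \<mu> (t p)" if "p < k" for p
    using prod_diff1[of "{..<k}" "\<lambda>q. \<mu> (t q)" p] assms that by simp
  then show ?thesis
    unfolding sym_coeff_def by (simp add: scaleR_sum_right divide_inverse mult_ac)
qed

section \<open>Positivity of the corrected coefficients\<close>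

lemma mult_le_weighted_squares:
  fixes a b t :: real assumes "t > 0"
  shows "a * b \<le> a^2 / (4 * t) + t * b^2"
proof -
  have "0 \<le> (a - 2 * t * b)^2" by simp
  then have "4 * t * (a * b) \<le> a^2 + 4 * t^2 * b^2" by (simp add: power2_eq_square algebra_simps)
  then have "a * b \<le> (a^2 + 4 * t^2 * b^2) / (4 * t)" using assms by (simp add: pos_le_divide_eq mult.commute)
  also have "\<dots> = a^2 / (4 * t) + t * b^2" using assms by (simp add: field_simps power2_eq_square)
  finally show ?thesis .
qed

lemma weighted_defect_sum_nonneg:
  fixes \<kappa> \<nu> \<delta> :: "'v \<Rightarrow> real"
  assumes fin: "finite G" and th: "\<theta> > 0" and U: "U > 0"
    and kl: "\<And>h. h\<in>G \<Longrightarrow> cs \<le> \<kappa> h" and ku: "\<And>h. h\<in>G \<Longrightarrow> \<kappa> h \<le> Cs" and cs0: "cs \<ge> 0"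
    and nu: "\<And>h. h\<in>G \<Longrightarrow> 0 \<le> \<nu> h"
    and A1: "real (card G) * Cs^2 \<le> 2 * \<theta> * U * cs * (\<Sum>h\<in>G. \<nu> h)"
    and A2: "2 * \<theta> * U * err \<le> cs * (\<Sum>h\<in>G. \<nu> h)"
  shows "0 \<le> (\<Sum>h\<in>G. \<kappa> h * \<nu> h) - (\<Sum>h\<in>G. \<kappa> h * \<delta> h) + \<theta> * U * ((\<Sum>h\<in>G. (\<delta> h)^2) - err)"
proof -
  define t where "t = \<theta> * U"
  have t0: "t > 0" unfolding t_def using th U by simp
  have s1: "(\<Sum>h\<in>G. \<kappa> h * \<nu> h) \<ge> cs * (\<Sum>h\<in>G. \<nu> h)"
    unfolding sum_distrib_left by (rule sum_mono) (use kl nu in \<open>simp add: mult_right_mono\<close>)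
  have s2: "(\<Sum>h\<in>G. \<kappa> h * \<delta> h) \<le> (\<Sum>h\<in>G. (\<kappa> h)^2 / (4 * t) + t * (\<delta> h)^2)"
    by (rule sum_mono) (rule mult_le_weighted_squares[OF t0])
  have s3: "(\<Sum>h\<in>G. (\<kappa> h)^2 / (4 * t)) \<le> (\<Sum>h\<in>G. Cs^2 / (4 * t))"
  proof (rule sum_mono)
    fix h assume h: "h \<in> G"
    have "0 \<le> \<kappa> h" using kl[OF h] cs0 by simp
    then have "(\<kappa> h)^2 \<le> Cs^2" using ku[OF h] by (simp add: power_mono)
    then show "(\<kappa> h)^2 / (4 * t) \<le> Cs^2 / (4 * t)" using t0 by (simp add: divide_right_mono)
  qed
  have s4: "(\<Sum>h\<in>G. Cs^2 / (4 * t)) = real (card G) * Cs^2 / (4 * t)" by simp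
  have s5: "real (card G) * Cs^2 / (4 * t) \<le> cs * (\<Sum>h\<in>G. \<nu> h) / 2"
    using A1 t0 unfolding t_def by (simp add: divide_le_eq mult_ac)
  have "(\<Sum>h\<in>G. (\<kappa> h)^2 / (4 * t) + t * (\<delta> h)^2) = (\<Sum>h\<in>G. (\<kappa> h)^2 / (4 * t)) + t * (\<Sum>h\<in>G. (\<delta> h)^2)"
    by (simp add: sum.distrib sum_distrib_left)
  with s2 s3 s4 s5 have "(\<Sum>h\<in>G. \<kappa> h * \<delta> h) \<le> cs * (\<Sum>h\<in>G. \<nu> h) / 2 + t * (\<Sum>h\<in>G. (\<delta> h)^2)"
    by linarith
  with s1 A2 show ?thesis unfolding t_def by (simp add: algebra_simps)
qed

lemma inner_corrected_sum_eq:
  fixes R :: "real^'b \<Rightarrow> real^'b \<Rightarrow> real" and b :: "real^'b \<Rightarrow> real^'a"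
    and \<mu> :: "real^'b \<Rightarrow> real" and t :: "nat \<Rightarrow> real^'b"
  assumes fin: "finite G" and R: "\<And>g. linear (R g)" and tG: "\<forall>q<k. t q \<in> G"
    and hc: "\<forall>g\<in>G. u \<bullet> b g = R g (\<Sum>h\<in>G. \<kappa> h *\<^sub>R h)"
  defines "\<nu> \<equiv> visit_weight k \<mu> t"
  shows "u \<bullet> (\<Sum>p<k. (1 / \<mu> (t p)) *\<^sub>R
      (b (t p) + (\<theta> * null_correction G R (visit_weight_except k \<mu> t p) (t p)) *\<^sub>R a0))
    = (\<Sum>h\<in>G. \<kappa> h * \<nu> h) - (\<Sum>h\<in>G. \<kappa> h * coeff_defect G R \<nu> h)
      + \<theta> * (u \<bullet> a0) * ((\<Sum>h\<in>G. (coeff_defect G R \<nu> h)^2)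
        - (\<Sum>p<k. null_correction G R (\<lambda>g. if t p = g then 1 else 0) (t p) / (\<mu> (t p))^2))"
proof -
  let ?nc = "\<lambda>p. null_correction G R (\<lambda>g. if t p = g then 1 else 0) (t p)"
  have split: "null_correction G R (visit_weight_except k \<mu> t p) (t p)
      = null_correction G R \<nu> (t p) - (1 / \<mu> (t p)) * ?nc p" if "p < k" for p
    unfolding visit_weight_except_eq[OF that] \<nu>_def by (rule null_correction_diff[OF R])
  have "u \<bullet> (\<Sum>p<k. (1 / \<mu> (t p)) *\<^sub>R
      (b (t p) + (\<theta> * null_correction G R (visit_weight_except k \<mu> t p) (t p)) *\<^sub>R a0))
    = (\<Sum>p<k. (u \<bullet> b (t p)) / \<mu> (t p) + \<theta> * (u \<bullet> a0) * (null_correction G R \<nu> (t p) / \<mu> (t p))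
        - \<theta> * (u \<bullet> a0) * (?nc p / (\<mu> (t p))^2))"
    by (simp add: inner_sum_right inner_add_right split power2_eq_square algebra_simps)
  also have "\<dots> = (\<Sum>p<k. (u \<bullet> b (t p)) / \<mu> (t p))
      + \<theta> * (u \<bullet> a0) * ((\<Sum>p<k. null_correction G R \<nu> (t p) / \<mu> (t p)) - (\<Sum>p<k. ?nc p / (\<mu> (t p))^2))"
    by (simp only: sum.distrib sum_subtractf sum_distrib_left right_diff_distrib add_diff_eq)
  also have "(\<Sum>p<k. (u \<bullet> b (t p)) / \<mu> (t p)) = (\<Sum>g\<in>G. \<nu> g * (u \<bullet> b g))"
    unfolding \<nu>_def by (rule sum_visit_weight[OF fin tG])
  also have "\<dots> = (\<Sum>g\<in>G. \<nu> g * R g (\<Sum>h\<in>G. \<kappa> h *\<^sub>R h))" using hc by simp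
  also have "\<dots> = (\<Sum>h\<in>G. \<kappa> h * (\<nu> h - coeff_defect G R \<nu> h))"
    by (rule sum_mult_coefficients_synthesis[OF R])
  also have "(\<Sum>p<k. null_correction G R \<nu> (t p) / \<mu> (t p)) = (\<Sum>g\<in>G. \<nu> g * null_correction G R \<nu> g)"
    unfolding \<nu>_def by (rule sum_visit_weight[OF fin tG])
  also have "\<dots> = (\<Sum>h\<in>G. (coeff_defect G R \<nu> h)^2)" by (rule sum_mult_null_correction[OF R])
  finally show ?thesis by (simp add: right_diff_distrib sum_subtractf)
qed

lemma sum_self_correction_le:
  assumes fin: "finite G" and tG: "\<forall>q<k. t q \<in> G" and \<mu>: "\<forall>g\<in>G. \<tau> \<le> \<mu> g" "\<tau> > 0"
  shows "(\<Sum>p<k. null_correction G R (\<lambda>g. if t p = g then 1 else 0) (t p) / (\<mu> (t p))^2)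
    \<le> real k * (\<Sum>h\<in>G. \<bar>null_correction G R (\<lambda>g. if h = g then 1 else 0) h\<bar>) / \<tau>^2"
proof -
  let ?E = "\<Sum>h\<in>G. \<bar>null_correction G R (\<lambda>g. if h = g then 1 else 0) h\<bar>"
  have "null_correction G R (\<lambda>g. if t p = g then 1 else 0) (t p) / (\<mu> (t p))^2 \<le> ?E / \<tau>^2"
    if "p < k" for p
  proof -
    have tp: "t p \<in> G" using tG that by simp
    have "null_correction G R (\<lambda>g. if t p = g then 1 else 0) (t p) \<le> ?E"
      using member_le_sum[OF tp _ fin, of "\<lambda>h. \<bar>null_correction G R (\<lambda>g. if h = g then 1 else 0) h\<bar>"]
      by simp
    moreover have "\<tau>^2 \<le> (\<mu> (t p))^2" using \<mu> tp by (simp add: power_mono)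
    moreover have "0 \<le> ?E" by (simp add: sum_nonneg)
    ultimately show ?thesis
      using \<mu>(2) by (intro frac_le) auto
  qed
  then have "(\<Sum>p<k. null_correction G R (\<lambda>g. if t p = g then 1 else 0) (t p) / (\<mu> (t p))^2)
      \<le> (\<Sum>p<k. ?E / \<tau>^2)" by (intro sum_mono) simp
  then show ?thesis by simp
qed

lemma inner_corrected_sum_nonneg:
  fixes R :: "real^'b \<Rightarrow> real^'b \<Rightarrow> real" and b :: "real^'b \<Rightarrow> real^'a"
  assumes fin: "finite G" and R: "\<And>g. linear (R g)" and tG: "\<forall>q<k. t q \<in> G"
    and \<mu>: "\<forall>g\<in>G. \<tau> \<le> \<mu> g \<and> \<mu> g \<le> M" "\<tau> > 0"
    and hc: "\<forall>g\<in>G. u \<bullet> b g = R g (\<Sum>h\<in>G. \<kappa> h *\<^sub>R h)"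
    and \<kappa>: "\<And>h. h \<in> G \<Longrightarrow> cs \<le> \<kappa> h" "\<And>h. h \<in> G \<Longrightarrow> \<kappa> h \<le> Cs" "cs \<ge> 0"
    and \<theta>: "\<theta> > 0" and U: "u \<bullet> a0 > 0"
    and A1: "real (card G) * Cs^2 \<le> 2 * \<theta> * (u \<bullet> a0) * cs * (real k / M)"
    and A2: "2 * \<theta> * (u \<bullet> a0) * (real k * E / \<tau>^2) \<le> cs * (real k / M)"
    and E: "E = (\<Sum>h\<in>G. \<bar>null_correction G R (\<lambda>g. if h = g then 1 else 0) h\<bar>)"
  shows "0 \<le> u \<bullet> (\<Sum>p<k. (1 / \<mu> (t p)) *\<^sub>R
    (b (t p) + (\<theta> * null_correction G R (visit_weight_except k \<mu> t p) (t p)) *\<^sub>R a0))"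
proof -
  define \<nu> where "\<nu> = visit_weight k \<mu> t"
  define err where "err = (\<Sum>p<k. null_correction G R (\<lambda>g. if t p = g then 1 else 0) (t p) / (\<mu> (t p))^2)"
  have \<nu>0: "0 \<le> \<nu> h" if "h \<in> G" for h
    unfolding \<nu>_def visit_weight_def using \<mu> that by (intro sum_nonneg) force
  have "real k / M \<le> (\<Sum>h\<in>G. \<nu> h)"
    unfolding \<nu>_def by (rule sum_visit_weight_lower[OF fin tG]) (use \<mu> in force)
  then have k_le: "c * (real k / M) \<le> c * (\<Sum>h\<in>G. \<nu> h)" if "c \<ge> 0" for c
    using that by (rule mult_left_mono)
  have "err \<le> real k * E / \<tau>^2"
    unfolding err_def E using sum_self_correction_le[OF fin tG _ \<mu>(2)] \<mu>(1) by blast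
  then have "2 * \<theta> * (u \<bullet> a0) * err \<le> 2 * \<theta> * (u \<bullet> a0) * (real k * E / \<tau>^2)"
    using \<theta> U by (intro mult_left_mono) auto
  with A2 k_le[OF \<kappa>(3)] have A2': "2 * \<theta> * (u \<bullet> a0) * err \<le> cs * (\<Sum>h\<in>G. \<nu> h)" by linarith
  have A1': "real (card G) * Cs^2 \<le> 2 * \<theta> * (u \<bullet> a0) * cs * (\<Sum>h\<in>G. \<nu> h)"
    using A1 k_le[of "2 * \<theta> * (u \<bullet> a0) * cs"] \<theta> U \<kappa>(3) by simp
  show ?thesis
    unfolding inner_corrected_sum_eq[OF fin R tG hc] \<nu>_def[symmetric] err_def[symmetric]
    by (rule weighted_defect_sum_nonneg[OF fin \<theta> U \<kappa> \<nu>0 A1' A2'])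
qed

text \<open>For \<theta> = A / k the first hypothesis of inner_corrected_sum_nonneg no longer involves k and fixes A
  (the correction must dominate the AM-GM loss); the second then holds once the linear term, of order
  k, dominates the error from leaving out the position itself, which is of order A.\<close>
lemma correction_scale_bounds:
  fixes s r cc M Ck nG a E \<tau> U A \<theta> :: real and k :: nat
  assumes s: "s > 0" and r: "r > 0" and cc: "cc > 0" and M: "M > 0" and nG: "nG \<ge> 0"
    and a: "a \<ge> 0" and E: "E \<ge> 0" and \<tau>: "\<tau> > 0" and U: "r * s \<le> U" "U \<le> a * s"
    and Adef: "A = nG * Ck^2 * M / (r * cc)"
    and kbig: "2 * A * a * E * M / (\<tau>^2 * cc) \<le> real k" and k0: "k > 0"
    and th: "\<theta> = A / real k"
  shows "nG * (Ck * s)^2 \<le> 2 * \<theta> * U * (cc * s) * (real k / M)"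
    and "2 * \<theta> * U * (real k * E / \<tau>^2) \<le> (cc * s) * (real k / M)"
proof -
  have A0: "A \<ge> 0" unfolding Adef using nG M r cc by simp
  have kp: "real k > 0" using k0 by simp
  have "2 * \<theta> * U * (cc * s) * (real k / M) = 2 * A * U * cc * s / M"
    unfolding th using kp M by (simp add: field_simps)
  also have "\<dots> \<ge> 2 * A * (r * s) * cc * s / M"
    using U A0 cc s M by (intro divide_right_mono mult_right_mono mult_left_mono) auto
  also have "2 * A * (r * s) * cc * s / M = 2 * nG * Ck^2 * s^2"
    unfolding Adef using r cc M by (simp add: field_simps power2_eq_square)
  finally have h1: "2 * nG * Ck^2 * s^2 \<le> 2 * \<theta> * U * (cc * s) * (real k / M)" .
  have "0 \<le> nG * Ck^2 * s^2" using nG by simp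
  then show "nG * (Ck * s)^2 \<le> 2 * \<theta> * U * (cc * s) * (real k / M)"
    using h1 by (simp add: power_mult_distrib)
  have "2 * \<theta> * U * (real k * E / \<tau>^2) = 2 * A * U * E / \<tau>^2"
    unfolding th using kp by (simp add: field_simps)
  also have "\<dots> \<le> 2 * A * (a * s) * E / \<tau>^2"
    using U A0 E by (intro divide_right_mono mult_right_mono mult_left_mono) auto
  also have "\<dots> = (cc * s / M) * (2 * A * a * E * M / (\<tau>^2 * cc))"
    using cc M \<tau> by (simp add: field_simps)
  also have "\<dots> \<le> (cc * s / M) * real k"
    using kbig cc s M by (intro mult_left_mono) auto
  finally show "2 * \<theta> * U * (real k * E / \<tau>^2) \<le> (cc * s) * (real k / M)" by simp
qed

definition frame_coeffs :: "(real^'b \<Rightarrow> real^'b \<Rightarrow> real) \<Rightarrow> real^('a \<times> 'b) \<Rightarrow> real^'b \<Rightarrow> real^'a" where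
  "frame_coeffs R x g = (\<chi> i. R g (\<chi> j. x$(i,j)))"

lemma frame_coeffs_decompose:
  assumes "\<And>v. (\<Sum>g\<in>G. R g v *\<^sub>R g) = v"
  shows "x$(i,j) = (\<Sum>g\<in>G. frame_coeffs R x g $ i * g$j)"
proof -
  have "(\<Sum>g\<in>G. R g (\<chi> j. x$(i,j)) *\<^sub>R g) $ j = x$(i,j)" by (simp add: assms)
  then show ?thesis unfolding frame_coeffs_def by (simp add: sum_component)
qed

lemma inner_frame_coeffs:
  assumes "linear (R g)"
  shows "u \<bullet> frame_coeffs R x g = R g (contract_left x u)"
  unfolding contract_left_eq_sum_rows frame_coeffs_def inner_vec_def
  by (simp add: linear_sum[OF assms] linear_scale[OF assms] mult.commute)

lemma corrected_frame_coeffs_decompose: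
  fixes R :: "real^'b \<Rightarrow> real^'b \<Rightarrow> real"
  assumes "\<And>v. (\<Sum>g\<in>G. R g v *\<^sub>R g) = v"
  shows "x$(i,j) = (\<Sum>g\<in>G. (frame_coeffs R x g + (\<theta> * null_correction G R \<nu> g) *\<^sub>R a0)$i * g$j)"
proof -
  have "(\<Sum>g\<in>G. null_correction G R \<nu> g *\<^sub>R g) $ j = 0"
    by (simp add: synthesis_null_correction[OF assms])
  then have "(\<Sum>g\<in>G. null_correction G R \<nu> g * g$j) = 0" by (simp add: sum_component)
  moreover have "(\<Sum>g\<in>G. (frame_coeffs R x g + (\<theta> * null_correction G R \<nu> g) *\<^sub>R a0)$i * g$j)
      = (\<Sum>g\<in>G. frame_coeffs R x g $ i * g$j) + \<theta> * a0$i * (\<Sum>g\<in>G. null_correction G R \<nu> g * g$j)"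
    by (simp add: algebra_simps sum.distrib sum_distrib_left)
  ultimately show ?thesis using frame_coeffs_decompose[OF assms, of x i j] by simp
qed

lemma corrected_coefficient_sum_mem_cone:
  fixes CA :: "(real^'a::finite) set" and x :: "real^('a \<times> 'b::finite)"
    and R :: "real^'b \<Rightarrow> real^'b \<Rightarrow> real"
  assumes CA: "convex CA" "closed CA" "cone CA" "CA \<noteq> {}"
    and G: "finite G" and R: "\<And>g. linear (R g)" and t: "\<forall>q<k. t q \<in> G"
    and \<mu>: "\<forall>g\<in>G. \<tau> \<le> \<mu> g \<and> \<mu> g \<le> M" "\<tau> > 0"
    and a0: "r > 0" "\<And>u. \<forall>a\<in>CA. 0 \<le> u \<bullet> a \<Longrightarrow> r * norm u \<le> u \<bullet> a0"
    and \<kappa>: "cc > 0" "\<And>u. \<forall>a\<in>CA. 0 \<le> u \<bullet> a \<Longrightarrow> u \<noteq> 0 \<Longrightarrow>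
      \<exists>\<kappa>. (\<forall>h\<in>G. cc * norm u \<le> \<kappa> h \<and> \<kappa> h \<le> Ck * norm u) \<and> contract_left x u = (\<Sum>h\<in>G. \<kappa> h *\<^sub>R h)"
    and A: "A = real (card G) * Ck^2 * M / (r * cc)" "A > 0"
    and E: "E = (\<Sum>h\<in>G. \<bar>null_correction G R (\<lambda>g. if h = g then 1 else 0) h\<bar>)"
    and k: "k \<ge> 1" "2 * A * norm a0 * E * M / (\<tau>^2 * cc) \<le> real k"
  shows "(\<Sum>p<k. (1 / \<mu> (t p)) *\<^sub>R (frame_coeffs R x (t p)
    + (A / real k * null_correction G R (visit_weight_except k \<mu> t p) (t p)) *\<^sub>R a0)) \<in> CA"
proof (rule cone_mem_of_dual_nonneg[OF CA])
  fix u assume u: "\<forall>a\<in>CA. 0 \<le> u \<bullet> a"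
  show "0 \<le> u \<bullet> (\<Sum>p<k. (1 / \<mu> (t p)) *\<^sub>R (frame_coeffs R x (t p)
    + (A / real k * null_correction G R (visit_weight_except k \<mu> t p) (t p)) *\<^sub>R a0))"
  proof (cases "u = 0")
    case False
    then obtain \<kappa> where \<kappa>u: "\<forall>h\<in>G. cc * norm u \<le> \<kappa> h \<and> \<kappa> h \<le> Ck * norm u"
      and X: "contract_left x u = (\<Sum>h\<in>G. \<kappa> h *\<^sub>R h)"
      using \<kappa>(2)[OF u] by blast
    have U: "r * norm u \<le> u \<bullet> a0" "u \<bullet> a0 \<le> norm a0 * norm u"
      using a0(2)[OF u] norm_cauchy_schwarz[of u a0] by (simp_all add: mult.commute)
    have "norm u > 0" using False by simp
    then have U0: "u \<bullet> a0 > 0" using U(1) a0(1) by (meson less_le_trans mult_pos_pos)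
    have "t 0 \<in> G" using t k(1) by simp
    then have "M > 0" using \<mu> by force
    have "E \<ge> 0" unfolding E by (simp add: sum_nonneg)
    note bounds = correction_scale_bounds[OF \<open>norm u > 0\<close> a0(1) \<kappa>(1) \<open>M > 0\<close> _ norm_ge_zero
        \<open>E \<ge> 0\<close> \<mu>(2) U A(1) k(2) _ refl]
    have hc: "\<forall>g\<in>G. u \<bullet> frame_coeffs R x g = R g (\<Sum>h\<in>G. \<kappa> h *\<^sub>R h)"
      by (simp add: inner_frame_coeffs R X)
    show ?thesis
      by (rule inner_corrected_sum_nonneg[OF G R t \<mu> hc _ _ _ _ U0 _ _ E])
        (use \<kappa>u \<kappa>(1) \<open>norm u > 0\<close> k(1) A(2) bounds in auto)
  qed simp
qed

section \<open>Membership in the minimal tensor power\<close>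

lemma sum_mem_conv_fun:
  assumes "finite T" "T \<noteq> {}" "\<And>t. t \<in> T \<Longrightarrow> v t \<in> S"
    and scale: "\<And>s c. s \<in> S \<Longrightarrow> c \<ge> 0 \<Longrightarrow> (\<lambda>i js. c * s i js) \<in> S"
  shows "(\<lambda>i js. \<Sum>t\<in>T. v t i js) \<in> conv_fun S"
proof -
  define N where "N = card T"
  obtain h where h: "bij_betw h {..<N} T"
    using ex_bij_betw_nat_finite assms(1) unfolding N_def lessThan_atLeast0 by blast
  have N0: "N > 0" using assms(1,2) unfolding N_def by (simp add: card_gt_0_iff)
  have "(\<lambda>i js. \<Sum>t\<in>T. v t i js) = (\<lambda>i js. \<Sum>m<N. (1 / real N) * (real N * v (h m) i js))"
  proof (intro ext)
    show "(\<Sum>t\<in>T. v t i js) = (\<Sum>m<N. (1 / real N) * (real N * v (h m) i js))" for i js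
      using N0 sum.reindex_bij_betw[OF h, of "\<lambda>t. v t i js"] by simp
  qed
  moreover have "(\<lambda>i js. real N * v (h m) i js) \<in> S" if "m < N" for m
    using that h scale assms(3) unfolding bij_betw_def by auto
  moreover have "(\<Sum>m<N. 1 / real N) = 1" using N0 by simp
  ultimately show ?thesis
    unfolding conv_fun_def
    by (intro CollectI exI[of _ N] exI[of _ "\<lambda>m. 1 / real N"]
        exI[of _ "\<lambda>m i js. real N * v (h m) i js"]) simp
qed

lemma sum_elem_tensor_mem_min_tensor_pow:
  assumes "cone CA" "finite G" "G \<noteq> {}" "G \<subseteq> CB"
    and "\<And>t. t \<in> PiE {..<k} (\<lambda>_. G) \<Longrightarrow> D t \<in> CA"
  shows "(\<lambda>i js. \<Sum>t\<in>PiE {..<k} (\<lambda>_. G). elem_tensor (D t) (map t [0..<k]) i js)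
    \<in> min_tensor_pow CA CB k"
  unfolding min_tensor_pow_def
proof (rule sum_mem_conv_fun)
  show "finite (PiE {..<k} (\<lambda>_. G))" using assms(2) by (intro finite_PiE) auto
  show "PiE {..<k} (\<lambda>_. G) \<noteq> {}" using assms(3) by (simp add: PiE_eq_empty_iff)
  show "elem_tensor (D t) (map t [0..<k]) \<in> {elem_tensor a bs |a bs. a \<in> CA \<and> length bs = k \<and> set bs \<subseteq> CB}"
    if "t \<in> PiE {..<k} (\<lambda>_. G)" for t
    using that assms(4,5) by fastforce
  fix s and c :: real
  assume "s \<in> {elem_tensor a bs |a bs. a \<in> CA \<and> length bs = k \<and> set bs \<subseteq> CB}" "c \<ge> 0"
  then obtain a bs where "s = elem_tensor a bs" "a \<in> CA" "length bs = k" "set bs \<subseteq> CB" "c \<ge> 0"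
    by blast
  moreover have "(\<lambda>i js. c * elem_tensor a bs i js) = elem_tensor (c *\<^sub>R a) bs"
    unfolding elem_tensor_def by (intro ext) simp
  moreover have "c *\<^sub>R a \<in> CA" using assms(1) \<open>a \<in> CA\<close> \<open>c \<ge> 0\<close> unfolding cone_def by blast
  ultimately show "(\<lambda>i js. c * s i js) \<in> {elem_tensor a bs |a bs. a \<in> CA \<and> length bs = k \<and> set bs \<subseteq> CB}"
    by blast
qed

lemma sym_proj_mem_min_tensor_pow_of_frame:
  fixes CA :: "(real^'a) set" and CB :: "(real^'b) set"
    and x :: "real^('a \<times> 'b)" and y :: "real^'b" and R :: "real^'b \<Rightarrow> real^'b \<Rightarrow> real"
  assumes CA: "convex CA" "closed CA" "cone CA" "CA \<noteq> {}"
    and G: "finite G" "G \<noteq> {}" "G \<subseteq> CB"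
    and R: "\<And>g. linear (R g)" "\<And>v. (\<Sum>g\<in>G. R g v *\<^sub>R g) = v"
    and \<mu>: "\<forall>g\<in>G. \<tau> \<le> \<mu> g \<and> \<mu> g \<le> M" "\<tau> > 0" "y = (\<Sum>g\<in>G. \<mu> g *\<^sub>R g)"
    and a0: "r > 0" "\<And>u. \<forall>a\<in>CA. 0 \<le> u \<bullet> a \<Longrightarrow> r * norm u \<le> u \<bullet> a0"
    and \<kappa>: "cc > 0" "Ck > 0" "\<And>u. \<forall>a\<in>CA. 0 \<le> u \<bullet> a \<Longrightarrow> u \<noteq> 0 \<Longrightarrow>
      \<exists>\<kappa>. (\<forall>h\<in>G. cc * norm u \<le> \<kappa> h \<and> \<kappa> h \<le> Ck * norm u) \<and> contract_left x u = (\<Sum>h\<in>G. \<kappa> h *\<^sub>R h)"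
  shows "\<exists>k\<ge>1. id_tensor_sym_proj k (x_tensor_ypow x y k) \<in> min_tensor_pow CA CB k"
proof -
  have M0: "M > 0" using \<mu>(1,2) G(2) by fastforce
  define E where "E = (\<Sum>h\<in>G. \<bar>null_correction G R (\<lambda>g. if h = g then 1 else 0) h\<bar>)"
  define A where "A = real (card G) * Ck^2 * M / (r * cc)"
  have A0: "A > 0" unfolding A_def using G(1,2) \<kappa>(1,2) M0 a0(1) by (simp add: card_gt_0_iff)
  define k where "k = nat \<lceil>2 * A * norm a0 * E * M / (\<tau>^2 * cc)\<rceil> + 1"
  have k: "k \<ge> 1" "2 * A * norm a0 * E * M / (\<tau>^2 * cc) \<le> real k"
    unfolding k_def by (simp_all add: of_nat_nat) linarith
  define c where "c \<nu> g = frame_coeffs R x g + (A / real k * null_correction G R \<nu> g) *\<^sub>R a0" for \<nu> g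
  have "sym_coeff k \<mu> c t \<in> CA" if t: "t \<in> PiE {..<k} (\<lambda>_. G)" for t
  proof -
    have tG: "\<forall>q<k. t q \<in> G" using t by auto
    then have \<mu>t: "0 < \<mu> (t q)" if "q < k" for q using \<mu>(1,2) that by force
    have "(\<Sum>p<k. (1 / \<mu> (t p)) *\<^sub>R c (visit_weight_except k \<mu> t p) (t p)) \<in> CA"
      unfolding c_def
      by (rule corrected_coefficient_sum_mem_cone[OF CA G(1) R(1) tG \<mu>(1,2) a0 \<kappa>(1,3) A_def A0 E_def k])
    moreover have "sym_coeff k \<mu> c t = ((\<Prod>q<k. \<mu> (t q)) / real k) *\<^sub>R
        (\<Sum>p<k. (1 / \<mu> (t p)) *\<^sub>R c (visit_weight_except k \<mu> t p) (t p))"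
      by (rule sym_coeff_eq_scaleR) (use \<mu>t in force)
    moreover have "0 \<le> (\<Prod>q<k. \<mu> (t q)) / real k"
      using \<mu>t by (intro divide_nonneg_nonneg prod_nonneg) (auto intro: less_imp_le)
    ultimately show ?thesis using CA(3) unfolding cone_def by simp
  qed
  moreover have "id_tensor_sym_proj k (x_tensor_ypow x y k)
    = (\<lambda>i js. \<Sum>t\<in>PiE {..<k} (\<lambda>_. G). elem_tensor (sym_coeff k \<mu> c t) (map t [0..<k]) i js)"
    unfolding c_def
    by (rule id_tensor_sym_proj_expansion[OF G(1) k(1) \<mu>(3) corrected_frame_coeffs_decompose[OF R(2)]])
  ultimately show ?thesis
    using sum_elem_tensor_mem_min_tensor_pow[OF CA(3) G] k(1) by auto
qed

theorem theorem4:
  fixes CA :: "(real^'a) set" and CB :: "(real^'b) set"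
    and x :: "real^('a \<times> 'b)" and y :: "real^'b"
  assumes "proper_cone CA" and "proper_cone CB"
    and "x \<in> interior (max_tensor CA CB)"
    and "y \<in> interior CB"
  shows "\<exists>k::nat. k \<ge> 1 \<and>
    id_tensor_sym_proj k (x_tensor_ypow x y k) \<in> min_tensor_pow CA CB k"
proof -
  have CA: "convex CA" "closed CA" "cone CA" "CA \<noteq> {}"
    and CB: "convex CB" "closed CB" "cone CB" "CB \<noteq> {}"
    and pointed: "\<forall>v. v \<in> CB \<and> - v \<in> CB \<longrightarrow> v = 0"
    using assms(1,2) unfolding proper_cone_def by auto
  obtain \<zeta>x \<zeta>y where \<zeta>x: "\<zeta>x > 0" "cball x \<zeta>x \<subseteq> max_tensor CA CB"
    and \<zeta>y: "\<zeta>y > 0" "cball y \<zeta>y \<subseteq> CB"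
    using assms(3,4) unfolding mem_interior_cball by blast
  define \<zeta> where "\<zeta> = min \<zeta>x \<zeta>y"
  have \<zeta>: "\<zeta> > 0" "cball x \<zeta> \<subseteq> max_tensor CA CB" "cball y \<zeta> \<subseteq> CB"
    unfolding \<zeta>_def using \<zeta>x \<zeta>y by (auto intro: subset_trans[OF subset_cball])
  obtain a0 r where a0: "r > 0" "\<And>u. \<forall>a\<in>CA. 0 \<le> u \<bullet> a \<Longrightarrow> r * norm u \<le> u \<bullet> a0"
    using dual_lower_bound_of_cball_max_tensor[OF CB pointed \<zeta>(2,1)] by blast
  show ?thesis
    by (rule interior_positive_frame[OF CB \<zeta>(1,3,2)])
      (rule sym_proj_mem_min_tensor_pow_of_frame[OF CA _ _ _ _ _ _ _ _ a0]; assumption)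
qed

end
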